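(* Let $\sigma\in(\tfrac12,1)$. There is $\theta_0=\theta_0(\sigma)\in(0,1)$ such that for every $\theta\in(\theta_0,1)$ the following holds. If $u\in H^\sigma(\mathbb{R})\setminus\{0\}$ minimizes $\mathcal{W}$ over $H^\sigma(\mathbb{R})\setminus\{0\}$, then there exist constants $a,b>0$ such that $u$ is a weak solution of $\mathcal{P}_1u+au-b|u|^2u=0$. Consequently $Q_1=b^{1/2}u$ solves $\mathcal{P}_1Q_1+\omega^{2\sigma}Q_1-|Q_1|^2Q_1=0$ with $\omega=a^{1/(2\sigma)}$.
   Context: $\mathcal{P}_1$ is the Fourier multiplier with symbol $p_1(\xi)=|\xi+1|^{2\sigma}-1-2\sigma\xi$, $\mathcal{P}_1^{1/2}$ the multiplier with symbol $p_1^{1/2}$. Let $\alpha=1/\sqrt{\sigma(2\sigma-1)}$. For $u\in H^\sigma(\mathbb{R})\setminus\{0\}$ define $W_1(u)=\|u\|_{L^2}^{\frac{4\sigma-1}{\sigma}}\|\mathcal{P}_1^{1/2}u\|_{L^2}^{\frac1\sigma}/\|u\|_{L^4}^4$, $W_2(u)=\alpha\|u\|_{L^2}^3\|\mathcal{P}_1^{1/2}u\|_{L^2}/\|u\|_{L^4}^4$, $W_3(u)=W_1(u)^{1-\theta}W_2(u)^\theta$, and $\mathcal{W}(u)=W_1(u)+W_2(u)-W_3(u)$. *)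

theory Defs
  imports "HOL-Analysis.Analysis"
begin

definition sq_int :: "(real \<Rightarrow> complex) \<Rightarrow> bool" where
  "sq_int f \<longleftrightarrow> f \<in> borel_measurable lborel \<and> integrable lborel (\<lambda>x. (cmod (f x))^2)"

definition fourier :: "(real \<Rightarrow> complex) \<Rightarrow> real \<Rightarrow> complex" where
  "fourier f \<xi> = complex_of_real (1 / sqrt (2 * pi)) *
      (LINT x|lborel. f x * exp (- \<i> * complex_of_real (x * \<xi>)))"

text \<open>uh is (a representative of) the L2 Fourier transform (Plancherel extension) of u,
  characterised by Parseval's identity against all functions in L1 and L2.\<close>
definition is_FT :: "(real \<Rightarrow> complex) \<Rightarrow> (real \<Rightarrow> complex) \<Rightarrow> bool" where
  "is_FT u uh \<longleftrightarrow> sq_int u \<and> sq_int uh \<and>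
     (\<forall>\<phi>. integrable lborel \<phi> \<and> sq_int \<phi> \<longrightarrow>
        (LINT x|lborel. u x * cnj (\<phi> x)) = (LINT \<xi>|lborel. uh \<xi> * cnj (fourier \<phi> \<xi>)))"

definition FT :: "(real \<Rightarrow> complex) \<Rightarrow> real \<Rightarrow> complex" where
  "FT u = (SOME uh. is_FT u uh)"

definition Hs :: "real \<Rightarrow> (real \<Rightarrow> complex) \<Rightarrow> bool" where
  "Hs \<sigma> u \<longleftrightarrow> (\<exists>uh. is_FT u uh \<and>
      integrable lborel (\<lambda>\<xi>. (1 + \<xi>^2) powr \<sigma> * (cmod (uh \<xi>))^2))"

definition p1 :: "real \<Rightarrow> real \<Rightarrow> real" where
  "p1 \<sigma> \<xi> = \<bar>\<xi> + 1\<bar> powr (2 * \<sigma>) - 1 - 2 * \<sigma> * \<xi>"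

definition L2norm :: "(real \<Rightarrow> complex) \<Rightarrow> real" where
  "L2norm u = sqrt (LINT x|lborel. (cmod (u x))^2)"

definition L4pow4 :: "(real \<Rightarrow> complex) \<Rightarrow> real" where
  "L4pow4 u = (LINT x|lborel. (cmod (u x))^4)"

text \<open>The L2 norm of P1^(1/2) u, computed on the Fourier side.\<close>
definition P1half_norm :: "real \<Rightarrow> (real \<Rightarrow> complex) \<Rightarrow> real" where
  "P1half_norm \<sigma> u = sqrt (LINT \<xi>|lborel. p1 \<sigma> \<xi> * (cmod (FT u \<xi>))^2)"

definition alpha :: "real \<Rightarrow> real" where
  "alpha \<sigma> = 1 / sqrt (\<sigma> * (2 * \<sigma> - 1))"

definition W1 :: "real \<Rightarrow> (real \<Rightarrow> complex) \<Rightarrow> real" where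
  "W1 \<sigma> u = L2norm u powr ((4 * \<sigma> - 1) / \<sigma>) * P1half_norm \<sigma> u powr (1 / \<sigma>) / L4pow4 u"

definition W2 :: "real \<Rightarrow> (real \<Rightarrow> complex) \<Rightarrow> real" where
  "W2 \<sigma> u = alpha \<sigma> * L2norm u ^ 3 * P1half_norm \<sigma> u / L4pow4 u"

definition W3 :: "real \<Rightarrow> real \<Rightarrow> (real \<Rightarrow> complex) \<Rightarrow> real" where
  "W3 \<sigma> \<theta> u = W1 \<sigma> u powr (1 - \<theta>) * W2 \<sigma> u powr \<theta>"

definition Wfun :: "real \<Rightarrow> real \<Rightarrow> (real \<Rightarrow> complex) \<Rightarrow> real" where
  "Wfun \<sigma> \<theta> u = W1 \<sigma> u + W2 \<sigma> u - W3 \<sigma> \<theta> u"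

text \<open>u in H^sigma is a weak solution of P1 u + a u - b |u|^2 u = 0
  (tested against all of H^sigma, pairing via the L2 inner product).\<close>
definition weak_sol :: "real \<Rightarrow> real \<Rightarrow> real \<Rightarrow> (real \<Rightarrow> complex) \<Rightarrow> bool" where
  "weak_sol \<sigma> a b u \<longleftrightarrow> Hs \<sigma> u \<and>
     (\<forall>\<phi>. Hs \<sigma> \<phi> \<longrightarrow>
        (LINT \<xi>|lborel. complex_of_real (p1 \<sigma> \<xi>) * FT u \<xi> * cnj (FT \<phi> \<xi>))
        + complex_of_real a * (LINT x|lborel. u x * cnj (\<phi> x))
        - complex_of_real b * (LINT x|lborel. complex_of_real ((cmod (u x))^2) * u x * cnj (\<phi> x))
        = 0)"

end

(*
  W depends on u only through A = ||u||_2^2, Q = ||P1^(1/2) u||_2^2 and L = ||u||_4^4, and along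
  a line u + t phi in H^sigma these are polynomials in t (for L this needs H^sigma in L^infinity,
  i.e. sigma > 1/2). At a minimiser the derivative of t -> W(u + t phi) at 0 vanishes; it is a
  combination of Re <u, phi>, Re <P1 u, phi> and Re <|u|^2 u, phi> whose coefficients are positive
  by Young's inequality W3 <= (1 - theta) W1 + theta W2, for every theta in (0, 1). Dividing by the
  coefficient of the P1 term gives a, b > 0, testing with i phi takes care of imaginary parts, and
  rescaling by sqrt b normalises the cubic term.

  The Fourier analysis needed on H^sigma (uniqueness of the transform characterised by Parseval's
  identity, hence linearity, and the inversion formula behind boundedness) reduces, through
  Gaussian test functions, to Levy's uniqueness theorem for characteristic functions.
*)

theory Submission
  imports Defs "HOL-Probability.Probability"
begin

lemma integrable_powr_atLeast_1:
  fixes e :: real assumes "e < -1"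
  shows "integrable lborel (\<lambda>x. indicator {1..} x * x powr e)"
proof -
  have "((\<lambda>x. x powr e) has_integral -(1 powr (e+1)) / (e+1)) {1..}"
    by (rule has_integral_powr_to_inf) (use assms in auto)
  hence "(\<lambda>x. x powr e) absolutely_integrable_on {1..}"
    by (intro nonnegative_absolutely_integrable_1) auto
  hence "integrable lebesgue (\<lambda>x. indicator {1..} x *\<^sub>R x powr e)"
    by (simp add: set_integrable_def)
  thus ?thesis
    by (subst (asm) integrable_completion) auto
qed

lemma integrable_one_plus_square_powr:
  fixes r :: real assumes "1/2 < r"
  shows "integrable lborel (\<lambda>x. (1 + x^2) powr (-r))"
proof -
  have e: "-2*r < -1" using assms by simp
  have i1: "integrable lborel (\<lambda>x. indicator {1..} x * x powr (-2*r))"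
    by (rule integrable_powr_atLeast_1[OF e])
  have i2: "integrable lborel (\<lambda>x. indicator {1..} (-x) * (-x) powr (-2*r))"
    using lborel_integrable_real_affine[OF i1, of "-1" 0] by simp
  have i0: "integrable lborel (\<lambda>x::real. indicator {-1..1} x :: real)"
    by (auto simp: integrable_indicator_iff)
  have ig: "integrable lborel (\<lambda>x. indicator {-1..1} x + indicator {1..} x * x powr (-2*r)
        + indicator {1..} (-x) * (-x) powr (-2*r))"
    using i0 i1 i2 by (intro Bochner_Integration.integrable_add) auto
  show ?thesis
  proof (rule Bochner_Integration.integrable_bound[OF ig])
    show "AE x in lborel. norm ((1 + x\<^sup>2) powr - r) \<le> norm (indicator {-1..1} x
        + indicator {1..} x * x powr (-2*r) + indicator {1..} (-x) * (-x) powr (-2*r))"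
    proof (intro AE_I2)
      fix x :: real
      have "1 \<le> (1 + x\<^sup>2) powr r" by (rule ge_one_powr_ge_zero) (use assms in auto)
      hence le_1: "(1 + x\<^sup>2) powr - r \<le> 1"
        by (simp add: powr_minus_divide divide_le_eq)
      have tail: "(1 + x\<^sup>2) powr - r \<le> \<bar>x\<bar> powr (-2*r)" if "\<bar>x\<bar> \<ge> 1"
      proof -
        have "x^2 = \<bar>x\<bar> powr 2" using that powr_realpow[of "\<bar>x\<bar>" 2] by simp
        hence "(x^2) powr (-r) = \<bar>x\<bar> powr (2 * (-r))" by (simp only: powr_powr)
        moreover have "(1 + x\<^sup>2) powr - r \<le> (x^2) powr (-r)"
          using that assms by (intro powr_mono2') auto
        ultimately show ?thesis by simp
      qed
      show "norm ((1 + x\<^sup>2) powr - r) \<le> norm (indicator {-1..1} x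
          + indicator {1..} x * x powr (-2*r) + indicator {1..} (-x) * (-x) powr (-2*r))"
        using tail le_1 by (cases "x \<ge> 1"; cases "x \<le> -1") (auto simp: indicator_def)
    qed
  qed measurable
qed

lemma norm_mult_cnj_le: "cmod (a * cnj b) \<le> ((cmod a)^2 + (cmod b)^2) / 2"
  using sum_squares_bound[of "cmod a" "cmod b"] by (simp add: norm_mult power2_eq_square)

lemma borel_measurable_cnj[measurable]:
  "f \<in> borel_measurable M \<Longrightarrow> (\<lambda>x. cnj (f x :: complex)) \<in> borel_measurable M"
  by (rule borel_measurable_continuous_on[where f=cnj]) (auto intro!: continuous_intros)

lemma sq_int_measurable: "sq_int f \<Longrightarrow> f \<in> borel_measurable lborel"
  by (simp add: sq_int_def)

lemma integrable_mult_cnj_sq_int: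
  assumes "sq_int f" "sq_int g"
  shows "integrable lborel (\<lambda>x. f x * cnj (g x))"
proof (rule Bochner_Integration.integrable_bound)
  note [measurable] = sq_int_measurable[OF assms(1)] sq_int_measurable[OF assms(2)]
  show "(\<lambda>x. f x * cnj (g x)) \<in> borel_measurable lborel" by measurable
  show "integrable lborel (\<lambda>x. ((cmod (f x))^2 + (cmod (g x))^2) / 2)"
    using assms unfolding sq_int_def by (intro integrable_divide Bochner_Integration.integrable_add) auto
  show "AE x in lborel. norm (f x * cnj (g x)) \<le> norm (((cmod (f x))^2 + (cmod (g x))^2) / 2)"
    using norm_mult_cnj_le by (auto intro!: AE_I2 order.trans[OF norm_mult_cnj_le])
qed

lemma cmod_add_scaled_le: "(cmod (a + c * b))^2 \<le> 2 * (cmod a)^2 + 2 * (cmod c)^2 * (cmod b)^2"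
proof -
  have "(cmod (a + c * b))^2 \<le> (cmod a + cmod c * cmod b)^2"
    using norm_triangle_ineq[of a "c * b"] by (intro power_mono) (auto simp: norm_mult)
  also have "\<dots> \<le> 2 * (cmod a)^2 + 2 * (cmod c)^2 * (cmod b)^2"
    using sum_squares_bound[of "cmod a" "cmod c * cmod b"] by (simp add: power2_eq_square algebra_simps)
  finally show ?thesis .
qed

lemma sq_int_add_scaled:
  assumes "sq_int f" "sq_int g"
  shows "sq_int (\<lambda>x. f x + c * g x)"
  unfolding sq_int_def
proof
  note [measurable] = sq_int_measurable[OF assms(1)] sq_int_measurable[OF assms(2)]
  show "(\<lambda>x. f x + c * g x) \<in> borel_measurable lborel" by measurable
  show "integrable lborel (\<lambda>x. (cmod (f x + c * g x))^2)"
  proof (rule Bochner_Integration.integrable_bound)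
    show "integrable lborel (\<lambda>x. 2 * (cmod (f x))^2 + 2 * (cmod c)^2 * (cmod (g x))^2)"
      using assms unfolding sq_int_def
      by (intro Bochner_Integration.integrable_add integrable_mult_right) auto
    show "AE x in lborel. norm ((cmod (f x + c * g x))^2)
        \<le> norm (2 * (cmod (f x))^2 + 2 * (cmod c)^2 * (cmod (g x))^2)"
      using cmod_add_scaled_le by (auto intro!: AE_I2)
  qed measurable
qed

lemma sq_int_scaled: "sq_int f \<Longrightarrow> sq_int (\<lambda>x. c * f x)"
  using sq_int_add_scaled[of "\<lambda>x. 0" f c] by (simp add: sq_int_def)

lemma integrable_lborel_pair_mult:
  fixes f g :: "real \<Rightarrow> complex"
  assumes f: "integrable lborel f" and g: "integrable lborel g"
  shows "integrable (lborel \<Otimes>\<^sub>M lborel) (\<lambda>(x,y). f x * g y)"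
proof -
  have [measurable]: "f \<in> borel_measurable lborel" "g \<in> borel_measurable lborel"
    using f g by auto
  have "(\<integral>\<^sup>+ p. ennreal (norm ((\<lambda>(x,y). f x * g y) p)) \<partial>(lborel \<Otimes>\<^sub>M lborel))
      = (\<integral>\<^sup>+ x. \<integral>\<^sup>+ y. ennreal (norm (f x)) * ennreal (norm (g y)) \<partial>lborel \<partial>lborel)"
    by (subst lborel.nn_integral_fst[symmetric]) (auto simp: norm_mult ennreal_mult)
  also have "\<dots> = (\<integral>\<^sup>+ x. ennreal (norm (f x)) \<partial>lborel) * (\<integral>\<^sup>+ y. ennreal (norm (g y)) \<partial>lborel)"
    by (simp add: nn_integral_cmult nn_integral_multc)
  also have "\<dots> < \<infinity>"
    using f g unfolding integrable_iff_bounded by (simp add: ennreal_mult_less_top)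
  finally show ?thesis unfolding integrable_iff_bounded by auto
qed

section \<open>Fourier transform and its uniqueness\<close>

lemma integrable_mult_iexp:
  fixes f :: "real \<Rightarrow> complex"
  assumes "integrable lborel f"
  shows "integrable lborel (\<lambda>x. f x * iexp (t * x))"
proof -
  have [measurable]: "f \<in> borel_measurable lborel" using assms by auto
  show ?thesis
    by (rule Bochner_Integration.integrable_bound[OF integrable_norm[OF assms]]) (auto simp: norm_mult)
qed

lemma norm_unitary_integral_le:
  fixes f e :: "real \<Rightarrow> complex"
  assumes "\<And>x. cmod (e x) = 1"
  shows "cmod (complex_of_real (1 / sqrt (2 * pi)) * (LINT x|lborel. f x * e x))
    \<le> (LINT x|lborel. cmod (f x))"
proof -
  have "1 \<le> sqrt (2 * pi)" using pi_gt3 by (simp add: real_le_rsqrt)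
  hence "\<bar>1 / sqrt (2 * pi)\<bar> \<le> 1" by simp
  hence "cmod (complex_of_real (1 / sqrt (2 * pi)) * (LINT x|lborel. f x * e x))
      \<le> 1 * cmod (LINT x|lborel. f x * e x)"
    unfolding norm_mult norm_of_real by (rule mult_right_mono) simp
  also have "\<dots> \<le> (LINT x|lborel. cmod (f x * e x))"
    by (simp add: integral_norm_bound)
  finally show ?thesis by (simp add: norm_mult assms)
qed

lemma norm_fourier_le: "cmod (fourier \<psi> \<xi>) \<le> (LINT x|lborel. cmod (\<psi> x))"
  unfolding fourier_def by (rule norm_unitary_integral_le) simp

lemma borel_measurable_fourier[measurable]:
  assumes "\<psi> \<in> borel_measurable lborel"
  shows "fourier \<psi> \<in> borel_measurable lborel"
  using assms unfolding fourier_def[abs_def] by measurable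

lemma integrable_mult_cnj_fourier:
  assumes uh: "integrable lborel uh" and psi: "integrable lborel \<psi>"
  shows "integrable lborel (\<lambda>\<xi>. uh \<xi> * cnj (fourier \<psi> \<xi>))"
proof (rule Bochner_Integration.integrable_bound)
  have [measurable]: "uh \<in> borel_measurable lborel" "\<psi> \<in> borel_measurable lborel"
    using uh psi by auto
  show "integrable lborel (\<lambda>\<xi>. norm (uh \<xi>) * (LINT x|lborel. cmod (\<psi> x)))"
    using uh by (intro integrable_mult_left integrable_norm)
  show "(\<lambda>\<xi>. uh \<xi> * cnj (fourier \<psi> \<xi>)) \<in> borel_measurable lborel" by measurable
  show "AE \<xi> in lborel. norm (uh \<xi> * cnj (fourier \<psi> \<xi>))
      \<le> norm (norm (uh \<xi>) * (LINT x|lborel. cmod (\<psi> x)))"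
    by (intro AE_I2) (simp add: norm_mult mult_left_mono norm_fourier_le)
qed

definition gauss :: "real \<Rightarrow> real \<Rightarrow> complex" where
  "gauss b x = complex_of_real (exp (-((x - b)^2)/2))"

lemma borel_measurable_gauss[measurable]: "gauss b \<in> borel_measurable lborel"
  unfolding gauss_def[abs_def] by measurable

lemma integrable_gauss: "integrable lborel (gauss b)"
proof -
  have "integrable lborel (\<lambda>x. sqrt (2*pi) * normal_density b 1 x)" by auto
  moreover have "\<And>x. sqrt (2*pi) * normal_density b 1 x = exp (-((x - b)^2)/2)"
    by (simp add: normal_density_def)
  ultimately show ?thesis
    unfolding gauss_def[abs_def] by (intro integrable_of_real) simp
qed

lemma sq_int_gauss: "sq_int (gauss b)"
  unfolding sq_int_def
proof
  show "integrable lborel (\<lambda>x. (cmod (gauss b x))^2)"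
  proof (rule Bochner_Integration.integrable_bound[OF integrable_norm[OF integrable_gauss]])
    have "(exp (- (x - b)\<^sup>2 / 2))^2 \<le> exp (- (x - b)\<^sup>2 / 2)" for x
      by (simp add: power2_eq_square mult_le_cancel_right1)
    thus "AE x in lborel. norm ((cmod (gauss b x))\<^sup>2) \<le> norm (cmod (gauss b x))"
      by (simp add: gauss_def)
  qed measurable
qed measurable

lemma fourier_gauss: "fourier (gauss b) \<xi> = exp (- \<i> * complex_of_real (b * \<xi>)) * gauss 0 \<xi>"
proof -
  let ?I = "LINT y|lborel. complex_of_real (exp (-(y^2)/2)) * exp (- \<i> * complex_of_real (y * \<xi>))"
  have "(LINT x|lborel. gauss b x * exp (- \<i> * complex_of_real (x * \<xi>)))
     = (LINT y|lborel. gauss b (b + 1*y) * exp (- \<i> * complex_of_real ((b + 1*y) * \<xi>)))"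
    using lborel_integral_real_affine[of 1 "\<lambda>x. gauss b x * exp (- \<i> * complex_of_real (x * \<xi>))" b]
    by simp
  also have "\<dots> = (LINT y|lborel. exp (- \<i> * complex_of_real (b * \<xi>))
      * (complex_of_real (exp (-(y^2)/2)) * exp (- \<i> * complex_of_real (y * \<xi>))))"
    by (intro Bochner_Integration.integral_cong refl) (simp add: gauss_def algebra_simps exp_add[symmetric])
  also have "\<dots> = exp (- \<i> * complex_of_real (b * \<xi>)) * ?I"
    by simp
  finally have shift: "(LINT x|lborel. gauss b x * exp (- \<i> * complex_of_real (x * \<xi>)))
     = exp (- \<i> * complex_of_real (b * \<xi>)) * ?I" .
  \<comment> \<open>The centred Gaussian integral is the characteristic function of the standard normal law.\<close>
  have "gauss 0 \<xi> = char std_normal_distribution (-\<xi>)"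
    by (simp add: gauss_def char_std_normal_distribution)
  also have "\<dots> = (LINT y|lborel. std_normal_density y *\<^sub>R iexp ((-\<xi>) * y))"
    unfolding char_def by (subst integral_density) auto
  also have "\<dots> = complex_of_real (1 / sqrt (2*pi)) * ?I"
    by (simp add: std_normal_density_def scaleR_conv_of_real mult_ac flip: integral_mult_right_zero)
  finally show ?thesis
    unfolding fourier_def shift by (simp only: mult_ac)
qed

lemma sq_int_fourier_gauss: "sq_int (fourier (gauss b))"
proof -
  have "(cmod (fourier (gauss b) x))^2 = (cmod (gauss 0 x))^2" for x
    by (simp add: fourier_gauss norm_mult)
  thus ?thesis using sq_int_gauss[of 0] by (simp add: sq_int_def)
qed

lemma real_distribution_normalized_density:
  fixes g :: "real \<Rightarrow> real"
  assumes g: "integrable lborel g" "\<And>x. 0 \<le> g x" and m: "(LINT x|lborel. g x) = m" "0 < m"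
  shows "real_distribution (density lborel (\<lambda>x. ennreal (g x / m)))"
proof -
  have [measurable]: "g \<in> borel_measurable lborel" using g by auto
  have "emeasure (density lborel (\<lambda>x. ennreal (g x / m))) UNIV = (\<integral>\<^sup>+x. ennreal (g x / m) \<partial>lborel)"
    by (simp add: emeasure_density)
  also have "\<dots> = ennreal (LINT x|lborel. g x / m)"
    using g m by (intro nn_integral_eq_integral) auto
  also have "\<dots> = 1" using m by simp
  finally have "prob_space (density lborel (\<lambda>x. ennreal (g x / m)))"
    by (intro prob_spaceI) simp
  thus ?thesis unfolding real_distribution_def real_distribution_axioms_def by simp
qed

lemma char_normalized_density:
  fixes g :: "real \<Rightarrow> real"
  assumes g: "integrable lborel g" "\<And>x. 0 \<le> g x" and m: "0 < m"
  shows "char (density lborel (\<lambda>x. ennreal (g x / m))) t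
    = (LINT x|lborel. complex_of_real (g x) * iexp (t * x)) / m"
proof -
  have [measurable]: "g \<in> borel_measurable lborel" using g by auto
  have "char (density lborel (\<lambda>x. ennreal (g x / m))) t = (LINT x|lborel. (g x / m) *\<^sub>R iexp (t * x))"
    unfolding char_def by (subst integral_density) (auto simp: g m less_imp_le)
  thus ?thesis by (simp add: scaleR_conv_of_real)
qed

lemma AE_eq_if_fourier_integrals_eq:
  fixes f g :: "real \<Rightarrow> real"
  assumes f: "integrable lborel f" "\<And>x. 0 \<le> f x" and g: "integrable lborel g" "\<And>x. 0 \<le> g x"
    and eq: "\<And>t. (LINT x|lborel. complex_of_real (f x) * iexp (t * x))
                 = (LINT x|lborel. complex_of_real (g x) * iexp (t * x))"
  shows "AE x in lborel. f x = g x"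
proof -
  define m where "m = (LINT x|lborel. f x)"
  have mg: "(LINT x|lborel. g x) = m"
    using eq[of 0] unfolding m_def by simp
  have "m \<ge> 0" unfolding m_def using f by simp
  then consider "m = 0" | "m > 0" by linarith
  thus ?thesis
  proof cases
    case 1
    have "AE x in lborel. f x = 0"
      using f 1 unfolding m_def by (subst (asm) integral_nonneg_eq_0_iff_AE) auto
    moreover have "AE x in lborel. g x = 0"
      using g mg[unfolded 1] by (subst (asm) integral_nonneg_eq_0_iff_AE) auto
    ultimately show ?thesis by eventually_elim simp
  next
    case 2
    \<comment> \<open>Normalised, f and g are probability densities with the same characteristic function.\<close>
    have "density lborel (\<lambda>x. ennreal (f x / m)) = density lborel (\<lambda>x. ennreal (g x / m))"
      by (rule Levy_uniqueness)
        (use f g mg 2 eq in \<open>auto simp: m_def real_distribution_normalized_density char_normalized_density\<close>)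
    hence "AE x in lborel. ennreal (f x / m) = ennreal (g x / m)"
      using f g by (subst (asm) sigma_finite_measure.density_unique_iff[OF sigma_finite_lborel]) auto
    thus ?thesis
      by eventually_elim (use 2 f g in \<open>auto simp: divide_right_mono\<close>)
  qed
qed

lemma fourier_uniqueness_real:
  fixes f :: "real \<Rightarrow> real"
  assumes f: "integrable lborel f"
    and zero: "\<And>t. (LINT x|lborel. complex_of_real (f x) * iexp (t * x)) = 0"
  shows "AE x in lborel. f x = 0"
proof -
  have [measurable]: "f \<in> borel_measurable lborel" using f by auto
  define fp where "fp x = max (f x) 0" for x
  define fm where "fm x = max (- f x) 0" for x
  have ip: "integrable lborel fp" and im: "integrable lborel fm"
    unfolding fp_def fm_def using f by auto
  have "AE x in lborel. fp x = fm x"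
  proof (rule AE_eq_if_fourier_integrals_eq[OF ip _ im])
    fix t
    have "(LINT x|lborel. complex_of_real (fp x) * iexp (t * x))
        - (LINT x|lborel. complex_of_real (fm x) * iexp (t * x))
        = (LINT x|lborel. complex_of_real (f x) * iexp (t * x))"
    proof -
      have "(LINT x|lborel. complex_of_real (fp x) * iexp (t * x))
          - (LINT x|lborel. complex_of_real (fm x) * iexp (t * x))
          = (LINT x|lborel. complex_of_real (fp x) * iexp (t * x) - complex_of_real (fm x) * iexp (t * x))"
        using integrable_mult_iexp[OF integrable_of_real[OF ip]] integrable_mult_iexp[OF integrable_of_real[OF im]]
        by simp
      also have "\<dots> = (LINT x|lborel. complex_of_real (f x) * iexp (t * x))"
        by (intro Bochner_Integration.integral_cong refl) (simp add: fp_def fm_def max_def algebra_simps)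
      finally show ?thesis .
    qed
    thus "(LINT x|lborel. complex_of_real (fp x) * iexp (t * x))
        = (LINT x|lborel. complex_of_real (fm x) * iexp (t * x))"
      using zero[of t] by simp
  qed (auto simp: fp_def fm_def)
  thus ?thesis
    by eventually_elim (auto simp: fp_def fm_def split: if_splits)
qed

lemma fourier_uniqueness:
  fixes f :: "real \<Rightarrow> complex"
  assumes f: "integrable lborel f"
    and zero: "\<And>t. (LINT x|lborel. f x * iexp (t * x)) = 0"
  shows "AE x in lborel. f x = 0"
proof -
  have [measurable]: "f \<in> borel_measurable lborel" using f by auto
  have cnj_mult_iexp: "cnj (f x * iexp (-t * x)) = cnj (f x) * iexp (t * x)" for x t
    by (simp add: exp_cnj)
  have zero_cnj: "(LINT x|lborel. cnj (f x) * iexp (t * x)) = 0" for t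
  proof -
    have "(LINT x|lborel. cnj (f x) * iexp (t * x)) = (LINT x|lborel. cnj (f x * iexp (-t * x)))"
      by (simp only: cnj_mult_iexp)
    also have "\<dots> = cnj (LINT x|lborel. f x * iexp (-t * x))"
      by (rule Bochner_Integration.integral_cnj)
    finally show ?thesis using zero[of "-t"] by simp
  qed
  have i: "integrable lborel (\<lambda>x. f x * iexp (t * x))" "integrable lborel (\<lambda>x. cnj (f x) * iexp (t * x))" for t
    using integrable_mult_iexp[OF f] integrable_mult_iexp[OF integrable_cnj[OF f]] by blast+
  have re: "complex_of_real (Re z) = (z + cnj z) / 2"
    and im: "complex_of_real (Im z) = (z - cnj z) / (2 * \<i>)" for z
    by (simp_all add: complex_add_cnj complex_eq_iff)
  have "AE x in lborel. Re (f x) = 0"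
  proof (rule fourier_uniqueness_real)
    fix t
    have "(LINT x|lborel. complex_of_real (Re (f x)) * iexp (t * x))
        = (LINT x|lborel. (f x * iexp (t * x) + cnj (f x) * iexp (t * x)) / 2)"
      by (intro Bochner_Integration.integral_cong refl) (simp add: re field_simps)
    also have "\<dots> = 0" using i[of t] zero[of t] zero_cnj[of t] by simp
    finally show "(LINT x|lborel. complex_of_real (Re (f x)) * iexp (t * x)) = 0" .
  qed (use f in auto)
  moreover have "AE x in lborel. Im (f x) = 0"
  proof (rule fourier_uniqueness_real)
    fix t
    have "(LINT x|lborel. complex_of_real (Im (f x)) * iexp (t * x))
        = (LINT x|lborel. (f x * iexp (t * x) - cnj (f x) * iexp (t * x)) / (2 * \<i>))"
      by (intro Bochner_Integration.integral_cong refl) (simp add: im field_simps)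
    also have "\<dots> = 0" using i[of t] zero[of t] zero_cnj[of t] by simp
    finally show "(LINT x|lborel. complex_of_real (Im (f x)) * iexp (t * x)) = 0" .
  qed (use f in auto)
  ultimately show ?thesis by eventually_elim (simp add: complex_eq_iff)
qed

text \<open>Pairing against the Fourier transforms of all shifted Gaussians already determines
  a function of L2: this makes FT well defined up to null sets.\<close>

lemma is_FT_unique:
  assumes "is_FT u g1" "is_FT u g2"
  shows "AE \<xi> in lborel. g1 \<xi> = g2 \<xi>"
proof -
  have s1: "sq_int g1" and s2: "sq_int g2" using assms unfolding is_FT_def by auto
  have e: "(LINT \<xi>|lborel. g1 \<xi> * cnj (fourier (gauss b) \<xi>))
         = (LINT \<xi>|lborel. g2 \<xi> * cnj (fourier (gauss b) \<xi>))" for b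
    using assms integrable_gauss[of b] sq_int_gauss[of b] unfolding is_FT_def by metis
  define f where "f \<xi> = (g1 \<xi> - g2 \<xi>) * cnj (gauss 0 \<xi>)" for \<xi>
  have "integrable lborel f" unfolding f_def
    using integrable_mult_cnj_sq_int[OF sq_int_add_scaled[OF s1 s2, of "-1"] sq_int_gauss] by simp
  hence "AE \<xi> in lborel. f \<xi> = 0"
  proof (rule fourier_uniqueness)
    fix t
    have "(LINT x|lborel. f x * iexp (t * x))
        = (LINT \<xi>|lborel. g1 \<xi> * cnj (fourier (gauss t) \<xi>) - g2 \<xi> * cnj (fourier (gauss t) \<xi>))"
      by (intro Bochner_Integration.integral_cong refl) (simp add: f_def fourier_gauss exp_cnj algebra_simps)
    also have "\<dots> = 0"
      using e[of t] integrable_mult_cnj_sq_int[OF s1 sq_int_fourier_gauss[of t]]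
        integrable_mult_cnj_sq_int[OF s2 sq_int_fourier_gauss[of t]]
      by simp
    finally show "(LINT x|lborel. f x * iexp (t * x)) = 0" .
  qed
  thus ?thesis
    by eventually_elim (simp add: f_def gauss_def)
qed

section \<open>The Plancherel transform and H^\<sigma>\<close>

definition trunc :: "(real \<Rightarrow> complex) \<Rightarrow> nat \<Rightarrow> real \<Rightarrow> complex" where
  "trunc h n x = h x * indicator {x. \<bar>x\<bar> \<le> real n \<and> cmod (h x) \<le> real n} x"

lemma borel_measurable_trunc[measurable]:
  assumes [measurable]: "h \<in> borel_measurable lborel"
  shows "trunc h n \<in> borel_measurable lborel"
proof -
  have [measurable]: "{x. \<bar>x\<bar> \<le> real n \<and> cmod (h x) \<le> real n} \<in> sets lborel" by measurable
  show ?thesis unfolding trunc_def[abs_def] by measurable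
qed

lemma norm_trunc_le: "cmod (trunc h n x) \<le> real n * indicator {-real n..real n} x"
  by (auto simp: trunc_def indicator_def norm_mult)

lemma integrable_box: "integrable lborel (\<lambda>x::real. c * indicator {-real n..real n} x :: real)"
  by (intro integrable_mult_right) (auto simp: integrable_indicator_iff)

lemma
  assumes [measurable]: "h \<in> borel_measurable lborel"
  shows integrable_trunc: "integrable lborel (trunc h n)"
    and sq_int_trunc: "sq_int (trunc h n)"
proof -
  show "integrable lborel (trunc h n)"
    by (rule Bochner_Integration.integrable_bound[OF integrable_box[of "real n" n]])
      (auto intro!: AE_I2 order.trans[OF norm_trunc_le])
  have "(cmod (trunc h n x))\<^sup>2 \<le> real n * real n * indicator {-real n..real n} x" for x
  proof -
    have "(cmod (trunc h n x))\<^sup>2 \<le> (real n * indicator {-real n..real n} x)^2"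
      by (intro power_mono norm_trunc_le) auto
    thus ?thesis by (cases "x \<in> {-real n..real n}") (simp_all add: power2_eq_square)
  qed
  hence "AE x in lborel. norm ((cmod (trunc h n x))\<^sup>2) \<le> norm (real n * real n * indicator {-real n..real n} x)"
    by (intro AE_I2) (simp add: indicator_def)
  hence "integrable lborel (\<lambda>x. (cmod (trunc h n x))\<^sup>2)"
    by (rule Bochner_Integration.integrable_bound[OF integrable_box, rotated]) measurable
  thus "sq_int (trunc h n)" unfolding sq_int_def by simp
qed

text \<open>Truncations are integrable and square integrable, hence admissible test functions in is_FT.\<close>

lemma AE_zero_if_orthogonal_truncations:
  assumes [measurable]: "h \<in> borel_measurable lborel"
    and orth: "\<And>n. (LINT x|lborel. h x * cnj (trunc h n x)) = 0"
  shows "AE x in lborel. h x = 0"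
proof -
  let ?S = "\<lambda>n. {x. \<bar>x\<bar> \<le> real n \<and> cmod (h x) \<le> real n}"
  have AE_n: "AE x in lborel. (cmod (h x))^2 * indicator (?S n) x = 0" for n
  proof -
    have [measurable]: "?S n \<in> sets lborel" by measurable
    have "h x * cnj (trunc h n x) = complex_of_real ((cmod (h x))^2 * indicator (?S n) x)" for x
      by (auto simp: trunc_def indicator_def complex_norm_square[symmetric])
    hence "(LINT x|lborel. (cmod (h x))^2 * indicator (?S n) x) = 0"
      using orth[of n] by (simp only: integral_complex_of_real of_real_eq_0_iff)
    moreover have "integrable lborel (\<lambda>x. (cmod (h x))^2 * indicator (?S n) x)"
      by (rule Bochner_Integration.integrable_bound[OF integrable_box[of "real n * real n" n]])
        (auto intro!: AE_I2 simp: indicator_def power2_eq_square intro: mult_mono)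
    ultimately show ?thesis
      by (subst (asm) integral_nonneg_eq_0_iff_AE) (auto simp: indicator_def)
  qed
  hence "AE x in lborel. \<forall>n. (cmod (h x))^2 * indicator (?S n) x = 0"
    by (simp only: AE_all_countable) (use AE_n in blast)
  thus ?thesis
  proof eventually_elim
    case (elim x)
    obtain n :: nat where "max \<bar>x\<bar> (cmod (h x)) \<le> real n" using real_nat_ceiling_ge by blast
    with elim[rule_format, of n] show ?case by (auto simp: indicator_def)
  qed
qed

lemma is_FT_AE_zero:
  assumes "is_FT u uh" "AE \<xi> in lborel. uh \<xi> = 0"
  shows "AE x in lborel. u x = 0"
proof (rule AE_zero_if_orthogonal_truncations)
  show u[measurable]: "u \<in> borel_measurable lborel" using assms by (simp add: is_FT_def sq_int_def)
  fix n
  have "(LINT x|lborel. u x * cnj (trunc u n x)) = (LINT \<xi>|lborel. uh \<xi> * cnj (fourier (trunc u n) \<xi>))"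
    using assms(1) integrable_trunc[OF u] sq_int_trunc[OF u] unfolding is_FT_def by blast
  also have "\<dots> = 0"
    by (rule integral_eq_zero_AE) (use assms(2) in eventually_elim, simp)
  finally show "(LINT x|lborel. u x * cnj (trunc u n x)) = 0" .
qed

definition inverse_fourier :: "(real \<Rightarrow> complex) \<Rightarrow> real \<Rightarrow> complex" where
  "inverse_fourier uh x = complex_of_real (1 / sqrt (2 * pi))
     * (LINT \<xi>|lborel. uh \<xi> * exp (\<i> * complex_of_real (x * \<xi>)))"

lemma borel_measurable_inverse_fourier[measurable]:
  assumes [measurable]: "uh \<in> borel_measurable lborel"
  shows "inverse_fourier uh \<in> borel_measurable lborel"
  unfolding inverse_fourier_def[abs_def] by measurable

lemma norm_inverse_fourier_le: "cmod (inverse_fourier uh x) \<le> (LINT \<xi>|lborel. cmod (uh \<xi>))"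
  unfolding inverse_fourier_def by (rule norm_unitary_integral_le) simp

lemma parseval_integrable:
  assumes uh: "integrable lborel uh" and psi: "integrable lborel \<psi>"
  shows "(LINT \<xi>|lborel. uh \<xi> * cnj (fourier \<psi> \<xi>)) = (LINT x|lborel. inverse_fourier uh x * cnj (\<psi> x))"
proof -
  have [measurable]: "uh \<in> borel_measurable lborel" "\<psi> \<in> borel_measurable lborel" using uh psi by auto
  define c where "c = complex_of_real (1 / sqrt (2 * pi))"
  define F where "F x \<xi> = c * (uh \<xi> * cnj (\<psi> x) * exp (\<i> * complex_of_real (x * \<xi>)))" for x \<xi>
  have "integrable (lborel \<Otimes>\<^sub>M lborel) (case_prod F)"
  proof (rule Bochner_Integration.integrable_bound)
    show "integrable (lborel \<Otimes>\<^sub>M lborel) (\<lambda>(x,y). complex_of_real (cmod (\<psi> x)) * (c * complex_of_real (cmod (uh y))))"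
      by (rule integrable_lborel_pair_mult)
        (use uh psi in \<open>auto intro!: integrable_mult_right integrable_of_real\<close>)
    show "case_prod F \<in> borel_measurable (lborel \<Otimes>\<^sub>M lborel)" unfolding F_def[abs_def] by measurable
    show "AE p in lborel \<Otimes>\<^sub>M lborel. norm (case_prod F p)
        \<le> norm ((\<lambda>(x,y). complex_of_real (cmod (\<psi> x)) * (c * complex_of_real (cmod (uh y)))) p)"
      by (intro AE_I2) (auto simp: F_def norm_mult split: prod.splits)
  qed
  hence "(LINT \<xi>|lborel. LINT x|lborel. F x \<xi>) = (LINT x|lborel. LINT \<xi>|lborel. F x \<xi>)"
    by (rule lborel_pair.Fubini_integral)
  moreover have "uh \<xi> * cnj (fourier \<psi> \<xi>) = (LINT x|lborel. F x \<xi>)" for \<xi>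
  proof -
    have "cnj (fourier \<psi> \<xi>) = c * cnj (LINT x|lborel. \<psi> x * exp (- \<i> * complex_of_real (x * \<xi>)))"
      unfolding fourier_def c_def by simp
    also have "cnj (LINT x|lborel. \<psi> x * exp (- \<i> * complex_of_real (x * \<xi>)))
        = (LINT x|lborel. cnj (\<psi> x * exp (- \<i> * complex_of_real (x * \<xi>))))"
      by (rule Bochner_Integration.integral_cnj[symmetric])
    also have "(LINT x|lborel. cnj (\<psi> x * exp (- \<i> * complex_of_real (x * \<xi>))))
        = (LINT x|lborel. cnj (\<psi> x) * exp (\<i> * complex_of_real (x * \<xi>)))"
      by (intro Bochner_Integration.integral_cong refl) (simp add: exp_cnj)
    finally show ?thesis unfolding F_def by (simp add: mult_ac)
  qed
  moreover have "inverse_fourier uh x * cnj (\<psi> x) = (LINT \<xi>|lborel. F x \<xi>)" for x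
  proof -
    have "(LINT \<xi>|lborel. F x \<xi>)
        = (LINT \<xi>|lborel. (c * cnj (\<psi> x)) * (uh \<xi> * exp (\<i> * complex_of_real (x * \<xi>))))"
      by (intro Bochner_Integration.integral_cong refl) (simp add: F_def mult_ac)
    also have "\<dots> = (c * cnj (\<psi> x)) * (LINT \<xi>|lborel. uh \<xi> * exp (\<i> * complex_of_real (x * \<xi>)))"
      by (rule integral_mult_right_zero)
    finally show ?thesis unfolding inverse_fourier_def c_def by (simp only: mult_ac)
  qed
  ultimately show ?thesis by simp
qed

lemma
  assumes "Hs \<sigma> u"
  shows Hs_is_FT: "is_FT u (FT u)"
    and Hs_integrable_weighted: "integrable lborel (\<lambda>\<xi>. (1 + \<xi>^2) powr \<sigma> * (cmod (FT u \<xi>))^2)"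
proof -
  obtain uh where uh: "is_FT u uh" "integrable lborel (\<lambda>\<xi>. (1 + \<xi>^2) powr \<sigma> * (cmod (uh \<xi>))^2)"
    using assms unfolding Hs_def by blast
  show ft: "is_FT u (FT u)" unfolding FT_def by (rule someI[of "is_FT u", OF uh(1)])
  have [measurable]: "FT u \<in> borel_measurable lborel" using ft by (simp add: is_FT_def sq_int_def)
  have "AE \<xi> in lborel. uh \<xi> = FT u \<xi>" by (rule is_FT_unique[OF uh(1) ft])
  hence "AE \<xi> in lborel. (1 + \<xi>^2) powr \<sigma> * (cmod (uh \<xi>))^2 = (1 + \<xi>^2) powr \<sigma> * (cmod (FT u \<xi>))^2"
    by eventually_elim simp
  thus "integrable lborel (\<lambda>\<xi>. (1 + \<xi>^2) powr \<sigma> * (cmod (FT u \<xi>))^2)"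
    by (rule integrable_cong_AE_imp[OF uh(2), rotated]) measurable
qed

lemma
  assumes "Hs \<sigma> u"
  shows Hs_sq_int: "sq_int u"
    and Hs_measurable[measurable]: "u \<in> borel_measurable lborel"
    and Hs_measurable_FT[measurable]: "FT u \<in> borel_measurable lborel"
  using Hs_is_FT[OF assms] by (auto simp: is_FT_def sq_int_def)

lemma weighted_amgm:
  fixes w a :: real assumes "w > 0"
  shows "a \<le> (w * a^2 + 1 / w) / 2"
proof -
  have "0 \<le> (w * a - 1)^2" by simp
  hence "2 * w * a \<le> w^2 * a^2 + 1" by (simp add: power2_eq_square algebra_simps)
  thus ?thesis using assms by (simp add: power2_eq_square field_simps)
qed

text \<open>For \<sigma> > 1/2 the weight (1 + \<xi>^2) powr -\<sigma> is integrable, so Cauchy-Schwarz (here in its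
  AM-GM form) puts the Fourier transform of an H^\<sigma> function into L1.\<close>

lemma Hs_integrable_FT:
  assumes s: "1/2 < \<sigma>" and u: "Hs \<sigma> u"
  shows "integrable lborel (FT u)"
proof (rule Bochner_Integration.integrable_bound)
  show "integrable lborel (\<lambda>\<xi>. ((1 + \<xi>^2) powr \<sigma> * (cmod (FT u \<xi>))^2 + (1 + \<xi>^2) powr (-\<sigma>)) / 2)"
    using Hs_integrable_weighted[OF u] integrable_one_plus_square_powr[OF s]
    by (intro integrable_divide Bochner_Integration.integrable_add)
  show "AE \<xi> in lborel. norm (FT u \<xi>)
      \<le> norm (((1 + \<xi>^2) powr \<sigma> * (cmod (FT u \<xi>))^2 + (1 + \<xi>^2) powr (-\<sigma>)) / 2)"
  proof (intro AE_I2)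
    fix \<xi> :: real
    have nz: "1 + \<xi>^2 \<noteq> 0" by (smt (verit) zero_le_power2)
    have "norm (FT u \<xi>) \<le> ((1 + \<xi>^2) powr \<sigma> * (cmod (FT u \<xi>))^2 + 1 / (1 + \<xi>^2) powr \<sigma>) / 2"
      by (rule weighted_amgm) (use nz in simp)
    thus "norm (FT u \<xi>) \<le> norm (((1 + \<xi>^2) powr \<sigma> * (cmod (FT u \<xi>))^2 + (1 + \<xi>^2) powr (-\<sigma>)) / 2)"
      using nz by (simp add: powr_minus_divide)
  qed
qed (use u in measurable)

lemma Hs_AE_eq_inverse_fourier:
  assumes s: "1/2 < \<sigma>" and u: "Hs \<sigma> u"
  shows "AE x in lborel. u x = inverse_fourier (FT u) x"
proof -
  have i: "integrable lborel (FT u)" by (rule Hs_integrable_FT[OF s u])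
  define h where "h x = u x - inverse_fourier (FT u) x" for x
  have [measurable]: "h \<in> borel_measurable lborel" unfolding h_def[abs_def] using u by measurable
  have "AE x in lborel. h x = 0"
  proof (rule AE_zero_if_orthogonal_truncations)
    fix n
    have t: "integrable lborel (trunc h n)" "sq_int (trunc h n)"
      by (simp_all add: integrable_trunc sq_int_trunc)
    have i1: "integrable lborel (\<lambda>x. u x * cnj (trunc h n x))"
      by (rule integrable_mult_cnj_sq_int[OF Hs_sq_int[OF u] t(2)])
    have i2: "integrable lborel (\<lambda>x. inverse_fourier (FT u) x * cnj (trunc h n x))"
    proof (rule Bochner_Integration.integrable_bound)
      show "integrable lborel (\<lambda>x. (LINT \<xi>|lborel. cmod (FT u \<xi>)) * norm (trunc h n x))"
        using t(1) by (intro integrable_mult_right integrable_norm)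
      show "AE x in lborel. norm (inverse_fourier (FT u) x * cnj (trunc h n x))
          \<le> norm ((LINT \<xi>|lborel. cmod (FT u \<xi>)) * norm (trunc h n x))"
        by (intro AE_I2) (simp add: norm_mult mult_right_mono norm_inverse_fourier_le)
    qed (use u in measurable)
    have "(LINT x|lborel. u x * cnj (trunc h n x)) = (LINT \<xi>|lborel. FT u \<xi> * cnj (fourier (trunc h n) \<xi>))"
      using Hs_is_FT[OF u] t unfolding is_FT_def by blast
    also have "\<dots> = (LINT x|lborel. inverse_fourier (FT u) x * cnj (trunc h n x))"
      by (rule parseval_integrable[OF i t(1)])
    finally show "(LINT x|lborel. h x * cnj (trunc h n x)) = 0"
      using i1 i2 by (simp add: h_def left_diff_distrib)
  qed measurable
  thus ?thesis by eventually_elim (simp add: h_def)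
qed

lemma Hs_essentially_bounded:
  assumes "1/2 < \<sigma>" "Hs \<sigma> u"
  shows "\<exists>K. AE x in lborel. cmod (u x) \<le> K"
  using Hs_AE_eq_inverse_fourier[OF assms]
  by (auto intro!: exI[of _ "LINT \<xi>|lborel. cmod (FT u \<xi>)"] elim!: eventually_mono
      simp: norm_inverse_fourier_le)

section \<open>The symbol p1\<close>

lemma powr_gt_tangent_at_1:
  fixes r x :: real assumes r: "r > 1" and x: "x > 0" "x \<noteq> 1"
  shows "x powr r > 1 + r * (x - 1)"
proof (cases "x > 1")
  case True
  have "\<exists>z. 1 < z \<and> z < x \<and> (x powr r - 1 powr r = (x - 1) * (r * z powr (r - 1)))"
    by (rule MVT2[OF True]) (auto intro!: has_real_derivative_powr)
  then obtain z where z: "1 < z" "z < x" "x powr r - 1 = (x - 1) * (r * z powr (r - 1))" by auto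
  have "1 < z powr (r - 1)" using z r by (intro gr_one_powr) auto
  hence "(x - 1) * r * 1 < (x - 1) * r * z powr (r - 1)" using True r by (intro mult_strict_left_mono) auto
  thus ?thesis using z by (simp add: algebra_simps)
next
  case False
  hence x1: "x < 1" using x by simp
  have "\<exists>z. x < z \<and> z < 1 \<and> (1 powr r - x powr r = (1 - x) * (r * z powr (r - 1)))"
    by (rule MVT2[OF x1]) (use x in \<open>auto intro!: has_real_derivative_powr\<close>)
  then obtain z where z: "x < z" "z < 1" "1 - x powr r = (1 - x) * (r * z powr (r - 1))" by auto
  have "z powr (r - 1) < 1 powr (r - 1)" using z r x by (intro powr_less_mono2) auto
  hence "(1 - x) * r * z powr (r - 1) < (1 - x) * r * 1" using x1 r by (intro mult_strict_left_mono) auto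
  thus ?thesis using z by (simp add: algebra_simps)
qed

lemma p1_pos:
  assumes s: "1/2 < \<sigma>" and "\<xi> \<noteq> 0"
  shows "p1 \<sigma> \<xi> > 0"
proof (cases "\<xi> + 1 > 0")
  case True
  have "(\<xi> + 1) powr (2 * \<sigma>) > 1 + 2 * \<sigma> * (\<xi> + 1 - 1)"
    by (rule powr_gt_tangent_at_1) (use s True assms(2) in auto)
  thus ?thesis using True by (simp add: p1_def algebra_simps)
next
  case False
  have "2 * \<sigma> * \<xi> \<le> 2 * \<sigma> * (-1)" using False s by (intro mult_left_mono) auto
  moreover have "\<bar>\<xi> + 1\<bar> powr (2 * \<sigma>) \<ge> 0" by simp
  ultimately show ?thesis using s unfolding p1_def by linarith
qed

lemma p1_nonneg: "1/2 < \<sigma> \<Longrightarrow> p1 \<sigma> \<xi> \<ge> 0"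
  using p1_pos[of \<sigma> \<xi>] by (cases "\<xi> = 0") (auto simp: p1_def)

lemma p1_le_weight:
  assumes s: "1/2 < \<sigma>" "\<sigma> < 1"
  shows "p1 \<sigma> \<xi> \<le> 5 * (1 + \<xi>^2) powr \<sigma>"
proof -
  have w1: "1 \<le> (1 + \<xi>^2) powr \<sigma>" using s by (intro ge_one_powr_ge_zero) auto
  have e1: "\<bar>\<xi> + 1\<bar> powr (2 * \<sigma>) \<le> 2 * (1 + \<xi>^2) powr \<sigma>"
  proof (cases "\<xi> + 1 = 0")
    case True thus ?thesis using w1 by simp
  next
    case False
    have "\<bar>\<xi> + 1\<bar> powr (2 * \<sigma>) = ((\<xi> + 1)^2) powr \<sigma>"
      using False by (simp add: powr_powr[symmetric] powr_realpow)
    also have "\<dots> \<le> (2 * (1 + \<xi>^2)) powr \<sigma>"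
    proof (rule powr_mono2)
      show "(\<xi> + 1)^2 \<le> 2 * (1 + \<xi>^2)"
        using sum_squares_bound[of \<xi> 1] by (simp add: power2_eq_square algebra_simps)
    qed (use s in auto)
    also have "\<dots> = 2 powr \<sigma> * (1 + \<xi>^2) powr \<sigma>" by (rule powr_mult)
    also have "\<dots> \<le> 2 * (1 + \<xi>^2) powr \<sigma>"
      using powr_mono[of \<sigma> 1 2] s by (intro mult_right_mono) auto
    finally show ?thesis .
  qed
  have e2: "\<bar>\<xi>\<bar> \<le> (1 + \<xi>^2) powr \<sigma>"
  proof -
    have "\<bar>\<xi>\<bar> \<le> sqrt (1 + \<xi>^2)" by (simp add: real_le_rsqrt)
    also have "\<dots> = (1 + \<xi>^2) powr (1/2)" by (simp add: powr_half_sqrt add_pos_nonneg)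
    also have "\<dots> \<le> (1 + \<xi>^2) powr \<sigma>" using s by (intro powr_mono) auto
    finally show ?thesis .
  qed
  have "- 2 * \<sigma> * \<xi> \<le> 2 * \<bar>\<xi>\<bar>"
    using mult_left_mono[of "-\<xi>" "\<bar>\<xi>\<bar>" \<sigma>] mult_right_mono[of \<sigma> 1 "\<bar>\<xi>\<bar>"] s by force
  thus ?thesis using e1 e2 w1 by (simp add: p1_def)
qed

section \<open>Linear structure of H^\<sigma>\<close>

lemma is_FT_add_scaled:
  assumes u: "is_FT u uh" and v: "is_FT v vh"
    and iu: "integrable lborel uh" and iv: "integrable lborel vh"
  shows "is_FT (\<lambda>x. u x + c * v x) (\<lambda>\<xi>. uh \<xi> + c * vh \<xi>)"
  unfolding is_FT_def
proof (intro conjI allI impI)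
  have su: "sq_int u" "sq_int uh" and sv: "sq_int v" "sq_int vh" using u v unfolding is_FT_def by auto
  show "sq_int (\<lambda>x. u x + c * v x)" "sq_int (\<lambda>\<xi>. uh \<xi> + c * vh \<xi>)"
    by (simp_all add: sq_int_add_scaled su sv)
  fix \<phi> assume \<phi>: "integrable lborel \<phi> \<and> sq_int \<phi>"
  have "(LINT x|lborel. (u x + c * v x) * cnj (\<phi> x))
      = (LINT x|lborel. u x * cnj (\<phi> x)) + c * (LINT x|lborel. v x * cnj (\<phi> x))"
    using integrable_mult_cnj_sq_int[OF su(1)] integrable_mult_cnj_sq_int[OF sv(1)] \<phi>
    by (simp add: distrib_right mult.assoc)
  also have "\<dots> = (LINT \<xi>|lborel. uh \<xi> * cnj (fourier \<phi> \<xi>)) + c * (LINT \<xi>|lborel. vh \<xi> * cnj (fourier \<phi> \<xi>))"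
    using u v \<phi> unfolding is_FT_def by simp
  also have "\<dots> = (LINT \<xi>|lborel. (uh \<xi> + c * vh \<xi>) * cnj (fourier \<phi> \<xi>))"
    using integrable_mult_cnj_fourier[OF iu] integrable_mult_cnj_fourier[OF iv] \<phi>
    by (simp add: distrib_right mult.assoc)
  finally show "(LINT x|lborel. (u x + c * v x) * cnj (\<phi> x))
      = (LINT \<xi>|lborel. (uh \<xi> + c * vh \<xi>) * cnj (fourier \<phi> \<xi>))" .
qed

lemma is_FT_scaled:
  assumes u: "is_FT u uh"
  shows "is_FT (\<lambda>x. c * u x) (\<lambda>\<xi>. c * uh \<xi>)"
  using u sq_int_scaled unfolding is_FT_def by (simp add: mult.assoc)

lemma integrable_weighted_add_scaled:
  assumes [measurable]: "f \<in> borel_measurable lborel" "g \<in> borel_measurable lborel"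
    and f: "integrable lborel (\<lambda>\<xi>. (1 + \<xi>^2) powr \<sigma> * (cmod (f \<xi>))^2)"
    and g: "integrable lborel (\<lambda>\<xi>. (1 + \<xi>^2) powr \<sigma> * (cmod (g \<xi>))^2)"
  shows "integrable lborel (\<lambda>\<xi>. (1 + \<xi>^2) powr \<sigma> * (cmod (f \<xi> + c * g \<xi>))^2)"
proof (rule Bochner_Integration.integrable_bound)
  show "integrable lborel (\<lambda>\<xi>. 2 * ((1 + \<xi>^2) powr \<sigma> * (cmod (f \<xi>))^2)
      + 2 * (cmod c)^2 * ((1 + \<xi>^2) powr \<sigma> * (cmod (g \<xi>))^2))"
    using f g by (intro Bochner_Integration.integrable_add integrable_mult_right)
  show "AE \<xi> in lborel. norm ((1 + \<xi>^2) powr \<sigma> * (cmod (f \<xi> + c * g \<xi>))^2)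
      \<le> norm (2 * ((1 + \<xi>^2) powr \<sigma> * (cmod (f \<xi>))^2) + 2 * (cmod c)^2 * ((1 + \<xi>^2) powr \<sigma> * (cmod (g \<xi>))^2))"
  proof (intro AE_I2)
    fix \<xi> :: real
    have "(1 + \<xi>^2) powr \<sigma> * (cmod (f \<xi> + c * g \<xi>))^2
        \<le> (1 + \<xi>^2) powr \<sigma> * (2 * (cmod (f \<xi>))^2 + 2 * (cmod c)^2 * (cmod (g \<xi>))^2)"
      by (intro mult_left_mono cmod_add_scaled_le) simp
    thus "norm ((1 + \<xi>^2) powr \<sigma> * (cmod (f \<xi> + c * g \<xi>))^2)
      \<le> norm (2 * ((1 + \<xi>^2) powr \<sigma> * (cmod (f \<xi>))^2) + 2 * (cmod c)^2 * ((1 + \<xi>^2) powr \<sigma> * (cmod (g \<xi>))^2))"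
      by (simp add: algebra_simps)
  qed
qed measurable

lemma
  assumes s: "1/2 < \<sigma>" and u: "Hs \<sigma> u" and v: "Hs \<sigma> v"
  shows Hs_add_scaled: "Hs \<sigma> (\<lambda>x. u x + c * v x)"
    and FT_add_scaled: "AE \<xi> in lborel. FT (\<lambda>x. u x + c * v x) \<xi> = FT u \<xi> + c * FT v \<xi>"
proof -
  have ft: "is_FT (\<lambda>x. u x + c * v x) (\<lambda>\<xi>. FT u \<xi> + c * FT v \<xi>)"
    by (rule is_FT_add_scaled[OF Hs_is_FT[OF u] Hs_is_FT[OF v] Hs_integrable_FT[OF s u] Hs_integrable_FT[OF s v]])
  show H: "Hs \<sigma> (\<lambda>x. u x + c * v x)" unfolding Hs_def
    using ft integrable_weighted_add_scaled[OF _ _ Hs_integrable_weighted[OF u] Hs_integrable_weighted[OF v]] u v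
    by auto
  show "AE \<xi> in lborel. FT (\<lambda>x. u x + c * v x) \<xi> = FT u \<xi> + c * FT v \<xi>"
    by (rule is_FT_unique[OF Hs_is_FT[OF H] ft])
qed

lemma
  assumes u: "Hs \<sigma> u"
  shows Hs_scaled: "Hs \<sigma> (\<lambda>x. c * u x)"
    and FT_scaled: "AE \<xi> in lborel. FT (\<lambda>x. c * u x) \<xi> = c * FT u \<xi>"
proof -
  have ft: "is_FT (\<lambda>x. c * u x) (\<lambda>\<xi>. c * FT u \<xi>)" by (rule is_FT_scaled[OF Hs_is_FT[OF u]])
  have "integrable lborel (\<lambda>\<xi>. (1 + \<xi>^2) powr \<sigma> * (cmod (0 + c * FT u \<xi>))^2)"
    by (rule integrable_weighted_add_scaled[OF _ _ _ Hs_integrable_weighted[OF u]]) (use u in auto)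
  thus H: "Hs \<sigma> (\<lambda>x. c * u x)" unfolding Hs_def using ft by auto
  show "AE \<xi> in lborel. FT (\<lambda>x. c * u x) \<xi> = c * FT u \<xi>"
    by (rule is_FT_unique[OF Hs_is_FT[OF H] ft])
qed

section \<open>Expansions along lines\<close>

definition L2sq :: "(real \<Rightarrow> complex) \<Rightarrow> real" where
  "L2sq f = (LINT x|lborel. (cmod (f x))^2)"

definition P1half_sq :: "real \<Rightarrow> (real \<Rightarrow> complex) \<Rightarrow> real" where
  "P1half_sq \<sigma> f = (LINT \<xi>|lborel. p1 \<sigma> \<xi> * (cmod (FT f \<xi>))^2)"

lemma L2norm_eq_sqrt_L2sq: "L2norm f = sqrt (L2sq f)"
  by (simp add: L2norm_def L2sq_def)

lemma P1half_norm_eq_sqrt_P1half_sq: "P1half_norm \<sigma> f = sqrt (P1half_sq \<sigma> f)"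
  by (simp add: P1half_norm_def P1half_sq_def)

definition L2_inner :: "(real \<Rightarrow> complex) \<Rightarrow> (real \<Rightarrow> complex) \<Rightarrow> complex" where
  "L2_inner u \<phi> = (LINT x|lborel. u x * cnj (\<phi> x))"

definition P1_form :: "real \<Rightarrow> (real \<Rightarrow> complex) \<Rightarrow> (real \<Rightarrow> complex) \<Rightarrow> complex" where
  "P1_form \<sigma> u \<phi> = (LINT \<xi>|lborel. complex_of_real (p1 \<sigma> \<xi>) * FT u \<xi> * cnj (FT \<phi> \<xi>))"

definition cubic_form :: "(real \<Rightarrow> complex) \<Rightarrow> (real \<Rightarrow> complex) \<Rightarrow> complex" where
  "cubic_form u \<phi> = (LINT x|lborel. complex_of_real ((cmod (u x))^2) * u x * cnj (\<phi> x))"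

lemma weak_sol_iff_forms:
  "weak_sol \<sigma> a b u \<longleftrightarrow> Hs \<sigma> u \<and> (\<forall>\<phi>. Hs \<sigma> \<phi> \<longrightarrow>
     P1_form \<sigma> u \<phi> + complex_of_real a * L2_inner u \<phi> - complex_of_real b * cubic_form u \<phi> = 0)"
  by (simp add: weak_sol_def P1_form_def L2_inner_def cubic_form_def)

lemma cmod_add_real_scaled_square:
  "(cmod (a + complex_of_real t * b))^2 = (cmod a)^2 + 2 * t * Re (a * cnj b) + t^2 * (cmod b)^2"
  unfolding cmod_power2 by (simp add: power2_eq_square algebra_simps)

lemma L2sq_add_scaled:
  assumes u: "sq_int u" and \<phi>: "sq_int \<phi>"
  shows "L2sq (\<lambda>x. u x + complex_of_real t * \<phi> x) = L2sq u + 2 * t * Re (L2_inner u \<phi>) + t^2 * L2sq \<phi>"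
proof -
  have [simp]: "integrable lborel (\<lambda>x. (cmod (u x))^2)" "integrable lborel (\<lambda>x. (cmod (\<phi> x))^2)"
    using u \<phi> by (auto simp: sq_int_def)
  have i: "integrable lborel (\<lambda>x. u x * cnj (\<phi> x))" by (rule integrable_mult_cnj_sq_int[OF u \<phi>])
  define r where "r x = Re (u x * cnj (\<phi> x))" for x
  have [simp]: "integrable lborel r" unfolding r_def by (rule integrable_Re[OF i])
  have "L2sq (\<lambda>x. u x + complex_of_real t * \<phi> x)
      = (LINT x|lborel. (cmod (u x))^2 + 2 * t * r x + t^2 * (cmod (\<phi> x))^2)"
    unfolding L2sq_def r_def by (simp only: cmod_add_real_scaled_square)
  also have "\<dots> = L2sq u + 2 * t * (LINT x|lborel. r x) + t^2 * L2sq \<phi>"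
    unfolding L2sq_def by (simp add: Bochner_Integration.integral_add)
  also have "(LINT x|lborel. r x) = Re (L2_inner u \<phi>)"
    unfolding r_def L2_inner_def by (rule integral_Re[OF i])
  finally show ?thesis .
qed

lemma integrable_p1_FT_square:
  assumes s: "1/2 < \<sigma>" "\<sigma> < 1" and u: "Hs \<sigma> u"
  shows "integrable lborel (\<lambda>\<xi>. p1 \<sigma> \<xi> * (cmod (FT u \<xi>))^2)"
proof (rule Bochner_Integration.integrable_bound)
  show "integrable lborel (\<lambda>\<xi>. 5 * ((1 + \<xi>^2) powr \<sigma> * (cmod (FT u \<xi>))^2))"
    using Hs_integrable_weighted[OF u] by (rule integrable_mult_right)
  have "p1 \<sigma> \<xi> * (cmod (FT u \<xi>))^2 \<le> (5 * (1 + \<xi>^2) powr \<sigma>) * (cmod (FT u \<xi>))^2" for \<xi>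
    by (intro mult_right_mono p1_le_weight s) auto
  thus "AE \<xi> in lborel. norm (p1 \<sigma> \<xi> * (cmod (FT u \<xi>))^2) \<le> norm (5 * ((1 + \<xi>^2) powr \<sigma> * (cmod (FT u \<xi>))^2))"
    using p1_nonneg[OF s(1)] by (intro AE_I2) (simp add: mult.assoc)
qed (use u in \<open>unfold p1_def, measurable\<close>)

lemma integrable_p1_FT_mult_cnj:
  assumes s: "1/2 < \<sigma>" "\<sigma> < 1" and u: "Hs \<sigma> u" and v: "Hs \<sigma> v"
  shows "integrable lborel (\<lambda>\<xi>. complex_of_real (p1 \<sigma> \<xi>) * FT u \<xi> * cnj (FT v \<xi>))"
proof (rule Bochner_Integration.integrable_bound)
  show "integrable lborel (\<lambda>\<xi>. (p1 \<sigma> \<xi> * (cmod (FT u \<xi>))^2 + p1 \<sigma> \<xi> * (cmod (FT v \<xi>))^2) / 2)"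
    using integrable_p1_FT_square[OF s u] integrable_p1_FT_square[OF s v] by simp
  have "p1 \<sigma> \<xi> * cmod (FT u \<xi> * cnj (FT v \<xi>)) \<le> p1 \<sigma> \<xi> * (((cmod (FT u \<xi>))^2 + (cmod (FT v \<xi>))^2) / 2)" for \<xi>
    by (intro mult_left_mono norm_mult_cnj_le p1_nonneg s)
  thus "AE \<xi> in lborel. norm (complex_of_real (p1 \<sigma> \<xi>) * FT u \<xi> * cnj (FT v \<xi>))
      \<le> norm ((p1 \<sigma> \<xi> * (cmod (FT u \<xi>))^2 + p1 \<sigma> \<xi> * (cmod (FT v \<xi>))^2) / 2)"
    using p1_nonneg[OF s(1)] by (intro AE_I2) (simp add: norm_mult mult.assoc algebra_simps)
qed (use u v in \<open>unfold p1_def, measurable\<close>)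

lemma P1half_sq_add_scaled:
  assumes s: "1/2 < \<sigma>" "\<sigma> < 1" and u: "Hs \<sigma> u" and \<phi>: "Hs \<sigma> \<phi>"
  shows "P1half_sq \<sigma> (\<lambda>x. u x + complex_of_real t * \<phi> x)
    = P1half_sq \<sigma> u + 2 * t * Re (P1_form \<sigma> u \<phi>) + t^2 * P1half_sq \<sigma> \<phi>"
proof -
  note H = Hs_add_scaled[OF s(1) u \<phi>, of "complex_of_real t"]
  have [simp]: "integrable lborel (\<lambda>\<xi>. p1 \<sigma> \<xi> * (cmod (FT u \<xi>))^2)"
    "integrable lborel (\<lambda>\<xi>. p1 \<sigma> \<xi> * (cmod (FT \<phi> \<xi>))^2)"
    using integrable_p1_FT_square[OF s u] integrable_p1_FT_square[OF s \<phi>] by auto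
  have i: "integrable lborel (\<lambda>\<xi>. complex_of_real (p1 \<sigma> \<xi>) * FT u \<xi> * cnj (FT \<phi> \<xi>))"
    by (rule integrable_p1_FT_mult_cnj[OF s u \<phi>])
  define r where "r \<xi> = Re (complex_of_real (p1 \<sigma> \<xi>) * FT u \<xi> * cnj (FT \<phi> \<xi>))" for \<xi>
  have [simp]: "integrable lborel r" unfolding r_def by (rule integrable_Re[OF i])
  have "P1half_sq \<sigma> (\<lambda>x. u x + complex_of_real t * \<phi> x)
      = (LINT \<xi>|lborel. p1 \<sigma> \<xi> * (cmod (FT u \<xi> + complex_of_real t * FT \<phi> \<xi>))^2)"
    unfolding P1half_sq_def
  proof (rule Bochner_Integration.integral_cong_AE)
    show "AE \<xi> in lborel. p1 \<sigma> \<xi> * (cmod (FT (\<lambda>x. u x + complex_of_real t * \<phi> x) \<xi>))\<^sup>2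
        = p1 \<sigma> \<xi> * (cmod (FT u \<xi> + complex_of_real t * FT \<phi> \<xi>))\<^sup>2"
      using FT_add_scaled[OF s(1) u \<phi>, of "complex_of_real t"] by eventually_elim simp
  qed (use u \<phi> H in \<open>unfold p1_def, measurable\<close>)
  also have "\<dots> = (LINT \<xi>|lborel. p1 \<sigma> \<xi> * (cmod (FT u \<xi>))^2 + 2 * t * r \<xi> + t^2 * (p1 \<sigma> \<xi> * (cmod (FT \<phi> \<xi>))^2))"
    by (intro Bochner_Integration.integral_cong refl) (simp add: r_def cmod_add_real_scaled_square algebra_simps)
  also have "\<dots> = P1half_sq \<sigma> u + 2 * t * (LINT \<xi>|lborel. r \<xi>) + t^2 * P1half_sq \<sigma> \<phi>"
    unfolding P1half_sq_def by (simp add: Bochner_Integration.integral_add)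
  also have "(LINT \<xi>|lborel. r \<xi>) = Re (P1_form \<sigma> u \<phi>)"
    unfolding r_def P1_form_def by (rule integral_Re[OF i])
  finally show ?thesis .
qed

lemma integrable_quartic_bound:
  fixes h :: "real \<Rightarrow> 'b::{banach, second_countable_topology}"
  assumes u: "sq_int u" and \<phi>: "sq_int \<phi>"
    and Ku: "AE x in lborel. cmod (u x) \<le> K" and K\<phi>: "AE x in lborel. cmod (\<phi> x) \<le> K"
    and [measurable]: "h \<in> borel_measurable lborel"
    and h: "AE x in lborel. norm (h x) \<le> ((cmod (u x) + cmod (\<phi> x))^2)^2"
  shows "integrable lborel h"
proof (rule Bochner_Integration.integrable_bound)
  show "integrable lborel (\<lambda>x. 8 * K^2 * ((cmod (u x))^2 + (cmod (\<phi> x))^2))"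
    using u \<phi> unfolding sq_int_def by (intro integrable_mult_right Bochner_Integration.integrable_add) auto
  show "AE x in lborel. norm (h x) \<le> norm (8 * K^2 * ((cmod (u x))^2 + (cmod (\<phi> x))^2))"
    using Ku K\<phi> h
  proof eventually_elim
    case (elim x)
    let ?s = "(cmod (u x) + cmod (\<phi> x))^2"
    \<comment> \<open>One factor ?s is bounded by the sup-norms, the other by the L2 densities.\<close>
    have "?s \<le> (2 * K)^2" using elim(1,2) by (intro power_mono) auto
    moreover have "?s \<le> 2 * ((cmod (u x))^2 + (cmod (\<phi> x))^2)"
      using sum_squares_bound[of "cmod (u x)" "cmod (\<phi> x)"] by (simp add: power2_eq_square algebra_simps)
    ultimately have "?s^2 \<le> (2 * K)^2 * (2 * ((cmod (u x))^2 + (cmod (\<phi> x))^2))"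
      unfolding power2_eq_square[of ?s] by (intro mult_mono) auto
    also have "\<dots> = 8 * K^2 * ((cmod (u x))^2 + (cmod (\<phi> x))^2)"
      by (simp add: power_mult_distrib)
    finally show ?case using elim(3) by simp
  qed
qed fact

lemma integrable_L4:
  assumes "sq_int u" "AE x in lborel. cmod (u x) \<le> K"
  shows "integrable lborel (\<lambda>x. (cmod (u x))^4)"
proof (rule integrable_quartic_bound[OF assms(1) assms(1) assms(2) assms(2)])
  have [measurable]: "u \<in> borel_measurable lborel" by (rule sq_int_measurable[OF assms(1)])
  show "(\<lambda>x. (cmod (u x))^4) \<in> borel_measurable lborel" by measurable
  have "(cmod y)^4 \<le> ((cmod y + cmod y)^2)^2" for y :: complex
    by (simp add: power_mono)
  thus "AE x in lborel. norm ((cmod (u x))^4) \<le> ((cmod (u x) + cmod (u x))^2)^2" by simp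
qed

lemma quadratic_terms_le_square_sum:
  fixes z w :: complex
  shows "(cmod z)^2 \<le> (cmod z + cmod w)^2" "(cmod w)^2 \<le> (cmod z + cmod w)^2"
    and "cmod z * cmod w \<le> (cmod z + cmod w)^2" "\<bar>Re (z * cnj w)\<bar> \<le> (cmod z + cmod w)^2"
proof -
  show zw: "cmod z * cmod w \<le> (cmod z + cmod w)^2" by (simp add: power2_sum add_nonneg_nonneg)
  have "\<bar>Re (z * cnj w)\<bar> \<le> cmod z * cmod w"
    using abs_Re_le_cmod[of "z * cnj w"] by (simp add: norm_mult)
  with zw show "\<bar>Re (z * cnj w)\<bar> \<le> (cmod z + cmod w)^2" by linarith
qed (simp_all add: power_mono)

lemma cmod_add_real_scaled_pow4:
  fixes z w :: complex
  defines "a \<equiv> (cmod z)^2" and "r \<equiv> Re (z * cnj w)" and "b \<equiv> (cmod w)^2"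
  shows "(cmod (z + complex_of_real t * w))^4 = a * a + 4 * t * (a * r)
    + t^2 * (4 * (r * r) + 2 * (a * b)) + t^3 * (4 * (r * b)) + t^4 * (b * b)"
proof -
  have "(cmod (z + complex_of_real t * w))^4 = ((cmod (z + complex_of_real t * w))^2)^2"
    by (simp flip: power_mult)
  also have "\<dots> = (a + 2 * t * r + t^2 * b)^2"
    by (simp only: a_def r_def b_def cmod_add_real_scaled_square)
  finally show ?thesis by algebra
qed

lemma L4pow4_add_scaled:
  assumes u: "sq_int u" and \<phi>: "sq_int \<phi>"
    and Ku: "AE x in lborel. cmod (u x) \<le> K" and K\<phi>: "AE x in lborel. cmod (\<phi> x) \<le> K"
  shows "\<exists>c2 c3 c4. \<forall>t. L4pow4 (\<lambda>x. u x + complex_of_real t * \<phi> x)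
    = L4pow4 u + 4 * t * Re (cubic_form u \<phi>) + t^2 * c2 + t^3 * c3 + t^4 * c4"
proof -
  have [measurable]: "u \<in> borel_measurable lborel" "\<phi> \<in> borel_measurable lborel"
    using u \<phi> by (auto simp: sq_int_def)
  define a where "a x = (cmod (u x))^2" for x
  define r where "r x = Re (u x * cnj (\<phi> x))" for x
  define b where "b x = (cmod (\<phi> x))^2" for x
  define s where "s x = (cmod (u x) + cmod (\<phi> x))^2" for x
  have bounds: "\<bar>a x\<bar> \<le> s x" "\<bar>r x\<bar> \<le> s x" "\<bar>b x\<bar> \<le> s x" "cmod (u x) * cmod (\<phi> x) \<le> s x" for x
    using quadratic_terms_le_square_sum[of "u x" "\<phi> x"] by (simp_all add: a_def r_def b_def s_def)
  have int: "integrable lborel h"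
    if [measurable]: "h \<in> borel_measurable lborel" and "\<And>x. norm (h x) \<le> s x * s x"
    for h :: "real \<Rightarrow> 'b::{banach, second_countable_topology}"
    by (rule integrable_quartic_bound[OF u \<phi> Ku K\<phi>]) (use that in \<open>simp_all add: s_def power2_eq_square\<close>)
  have integrable_prod: "integrable lborel (\<lambda>x. f x * g x)" if "f \<in> {a, r, b}" "g \<in> {a, r, b}" for f g
  proof (rule int)
    show "(\<lambda>x. f x * g x) \<in> borel_measurable lborel" using that by (auto simp: a_def r_def b_def)
    have "\<bar>f x\<bar> \<le> s x" "\<bar>g x\<bar> \<le> s x" for x using that bounds by auto
    thus "norm (f x * g x) \<le> s x * s x" for x
      unfolding real_norm_def abs_mult by (intro mult_mono) (auto simp: s_def)
  qed
  have [simp]: "integrable lborel (\<lambda>x. a x * a x)" "integrable lborel (\<lambda>x. a x * r x)"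
    "integrable lborel (\<lambda>x. r x * r x)" "integrable lborel (\<lambda>x. a x * b x)"
    "integrable lborel (\<lambda>x. r x * b x)" "integrable lborel (\<lambda>x. b x * b x)"
    by (simp_all add: integrable_prod)
  have "Re (cubic_form u \<phi>) = (LINT x|lborel. a x * r x)"
  proof -
    have "norm (complex_of_real (a x) * u x * cnj (\<phi> x)) \<le> s x * s x" for x
      using bounds(1,4)[of x] by (simp add: norm_mult mult.assoc mult_mono)
    hence "integrable lborel (\<lambda>x. complex_of_real (a x) * u x * cnj (\<phi> x))"
      by (intro int) (auto simp: a_def)
    thus ?thesis
      unfolding cubic_form_def a_def by (simp add: r_def mult.assoc flip: integral_Re)
  qed
  moreover have "L4pow4 u = (LINT x|lborel. a x * a x)"
    unfolding L4pow4_def a_def by (simp flip: power_add)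
  moreover have "L4pow4 (\<lambda>x. u x + complex_of_real t * \<phi> x)
      = (LINT x|lborel. a x * a x) + 4 * t * (LINT x|lborel. a x * r x)
        + t^2 * (4 * (LINT x|lborel. r x * r x) + 2 * (LINT x|lborel. a x * b x))
        + t^3 * (4 * (LINT x|lborel. r x * b x)) + t^4 * (LINT x|lborel. b x * b x)" for t
  proof -
    have "L4pow4 (\<lambda>x. u x + complex_of_real t * \<phi> x) = (LINT x|lborel. a x * a x + 4 * t * (a x * r x)
        + t^2 * (4 * (r x * r x) + 2 * (a x * b x)) + t^3 * (4 * (r x * b x)) + t^4 * (b x * b x))"
      unfolding L4pow4_def a_def r_def b_def by (simp only: cmod_add_real_scaled_pow4)
    thus ?thesis by (simp add: Bochner_Integration.integral_add)
  qed
  ultimately show ?thesis by auto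
qed

lemma Hs_L4pow4_add_scaled:
  assumes s: "1/2 < \<sigma>" and u: "Hs \<sigma> u" and \<phi>: "Hs \<sigma> \<phi>"
  shows "\<exists>c2 c3 c4. \<forall>t. L4pow4 (\<lambda>x. u x + complex_of_real t * \<phi> x)
    = L4pow4 u + 4 * t * Re (cubic_form u \<phi>) + t^2 * c2 + t^3 * c3 + t^4 * c4"
proof -
  obtain K1 K2 where "AE x in lborel. cmod (u x) \<le> K1" "AE x in lborel. cmod (\<phi> x) \<le> K2"
    using Hs_essentially_bounded[OF s u] Hs_essentially_bounded[OF s \<phi>] by blast
  hence "AE x in lborel. cmod (u x) \<le> max K1 K2" "AE x in lborel. cmod (\<phi> x) \<le> max K1 K2"
    by (auto elim: eventually_mono)
  thus ?thesis by (rule L4pow4_add_scaled[OF Hs_sq_int[OF u] Hs_sq_int[OF \<phi>]])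
qed

section \<open>The functional W in coordinates\<close>

lemma L2sq_pos_iff_not_AE_zero:
  assumes "u \<in> borel_measurable lborel" "sq_int u"
  shows "L2sq u > 0 \<longleftrightarrow> \<not> (AE x in lborel. u x = 0)"
proof -
  have "L2sq u = 0 \<longleftrightarrow> (AE x in lborel. (cmod (u x))^2 = 0)"
    unfolding L2sq_def using assms by (intro integral_nonneg_eq_0_iff_AE) (auto simp: sq_int_def)
  moreover have "L2sq u \<ge> 0" unfolding L2sq_def by simp
  ultimately show ?thesis by (auto simp: order_less_le)
qed

lemma P1half_sq_pos:
  assumes s: "1/2 < \<sigma>" "\<sigma> < 1" and u: "Hs \<sigma> u" and A: "L2sq u > 0"
  shows "P1half_sq \<sigma> u > 0"
proof -
  have nonneg: "0 \<le> p1 \<sigma> \<xi> * (cmod (FT u \<xi>))^2" for \<xi> using p1_nonneg[OF s(1)] by simp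
  hence "P1half_sq \<sigma> u \<ge> 0" unfolding P1half_sq_def by (simp add: integral_nonneg_AE)
  moreover have "P1half_sq \<sigma> u \<noteq> 0"
  proof
    assume "P1half_sq \<sigma> u = 0"
    hence "AE \<xi> in lborel. p1 \<sigma> \<xi> * (cmod (FT u \<xi>))^2 = 0"
      unfolding P1half_sq_def using integrable_p1_FT_square[OF s u] nonneg
      by (subst (asm) integral_nonneg_eq_0_iff_AE) auto
    \<comment> \<open>p1 vanishes only at 0, a null set.\<close>
    hence "AE \<xi> in lborel. FT u \<xi> = 0"
      using AE_lborel_singleton[of 0] by eventually_elim (use p1_pos[OF s(1)] in force)
    hence "AE x in lborel. u x = 0" by (rule is_FT_AE_zero[OF Hs_is_FT[OF u]])
    thus False using A L2sq_pos_iff_not_AE_zero[OF Hs_measurable[OF u] Hs_sq_int[OF u]] by simp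
  qed
  ultimately show ?thesis by simp
qed

lemma L4pow4_pos:
  assumes s: "1/2 < \<sigma>" and u: "Hs \<sigma> u" and A: "L2sq u > 0"
  shows "L4pow4 u > 0"
proof -
  obtain K where K: "AE x in lborel. cmod (u x) \<le> K" using Hs_essentially_bounded[OF s u] by blast
  have "L4pow4 u \<ge> 0" unfolding L4pow4_def by simp
  moreover have "L4pow4 u \<noteq> 0"
  proof
    assume "L4pow4 u = 0"
    hence "AE x in lborel. (cmod (u x))^4 = 0"
      unfolding L4pow4_def using integrable_L4[OF Hs_sq_int[OF u] K]
      by (subst (asm) integral_nonneg_eq_0_iff_AE) auto
    hence "AE x in lborel. u x = 0" by eventually_elim simp
    thus False using A L2sq_pos_iff_not_AE_zero[OF Hs_measurable[OF u] Hs_sq_int[OF u]] by simp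
  qed
  ultimately show ?thesis by simp
qed

text \<open>W written in the coordinates A = ||u||_2^2, Q = ||P1^(1/2) u||_2^2, L = ||u||_4^4;
  taking logarithms turns W3 = W1^(1 - \<theta>) W2^\<theta> into a convex combination of exponents.\<close>

definition log_W1 :: "real \<Rightarrow> real \<Rightarrow> real \<Rightarrow> real \<Rightarrow> real" where
  "log_W1 \<sigma> A Q L = (4 * \<sigma> - 1) / (2 * \<sigma>) * ln A + 1 / (2 * \<sigma>) * ln Q - ln L"

definition log_W2 :: "real \<Rightarrow> real \<Rightarrow> real \<Rightarrow> real \<Rightarrow> real" where
  "log_W2 \<sigma> A Q L = ln (alpha \<sigma>) + 3 / 2 * ln A + 1 / 2 * ln Q - ln L"

definition W_coords :: "real \<Rightarrow> real \<Rightarrow> real \<Rightarrow> real \<Rightarrow> real \<Rightarrow> real" where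
  "W_coords \<sigma> \<theta> A Q L = exp (log_W1 \<sigma> A Q L) + exp (log_W2 \<sigma> A Q L)
     - exp ((1 - \<theta>) * log_W1 \<sigma> A Q L + \<theta> * log_W2 \<sigma> A Q L)"

lemma alpha_pos: "1/2 < \<sigma> \<Longrightarrow> alpha \<sigma> > 0"
  unfolding alpha_def by simp

lemma
  assumes s: "1/2 < \<sigma>" "\<sigma> < 1" and u: "Hs \<sigma> u" and A: "L2sq u > 0"
  shows W1_eq_exp_log_W1: "W1 \<sigma> u = exp (log_W1 \<sigma> (L2sq u) (P1half_sq \<sigma> u) (L4pow4 u))"
    and W2_eq_exp_log_W2: "W2 \<sigma> u = exp (log_W2 \<sigma> (L2sq u) (P1half_sq \<sigma> u) (L4pow4 u))"
    and W3_eq_exp_log_W: "W3 \<sigma> \<theta> u = exp ((1 - \<theta>) * log_W1 \<sigma> (L2sq u) (P1half_sq \<sigma> u) (L4pow4 u)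
      + \<theta> * log_W2 \<sigma> (L2sq u) (P1half_sq \<sigma> u) (L4pow4 u))"
proof -
  have Q: "P1half_sq \<sigma> u > 0" and L: "L4pow4 u > 0"
    using P1half_sq_pos[OF s u A] L4pow4_pos[OF s(1) u A] .
  have sqrt_powr: "sqrt x powr e = exp (e / 2 * ln x)" if "x > 0" for x e
    using that by (simp add: powr_def ln_sqrt)
  show W1: "W1 \<sigma> u = exp (log_W1 \<sigma> (L2sq u) (P1half_sq \<sigma> u) (L4pow4 u))"
    unfolding W1_def L2norm_eq_sqrt_L2sq P1half_norm_eq_sqrt_P1half_sq log_W1_def
    using A Q L by (simp add: sqrt_powr exp_add exp_diff mult.commute)
  have "sqrt (L2sq u) ^ 3 = exp (3 / 2 * ln (L2sq u))" "sqrt (P1half_sq \<sigma> u) = exp (1 / 2 * ln (P1half_sq \<sigma> u))"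
    using sqrt_powr[OF A, of 3] sqrt_powr[OF Q, of 1] A Q by (simp_all add: powr_realpow)
  thus W2: "W2 \<sigma> u = exp (log_W2 \<sigma> (L2sq u) (P1half_sq \<sigma> u) (L4pow4 u))"
    unfolding W2_def L2norm_eq_sqrt_L2sq P1half_norm_eq_sqrt_P1half_sq log_W2_def
    using alpha_pos[OF s(1)] L by (simp add: exp_add exp_diff)
  show "W3 \<sigma> \<theta> u = exp ((1 - \<theta>) * log_W1 \<sigma> (L2sq u) (P1half_sq \<sigma> u) (L4pow4 u)
      + \<theta> * log_W2 \<sigma> (L2sq u) (P1half_sq \<sigma> u) (L4pow4 u))"
    unfolding W3_def W1 W2 by (simp add: powr_def exp_add)
qed

lemma Wfun_eq_W_coords:
  assumes s: "1/2 < \<sigma>" "\<sigma> < 1" and u: "Hs \<sigma> u" and A: "L2sq u > 0"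
  shows "Wfun \<sigma> \<theta> u = W_coords \<sigma> \<theta> (L2sq u) (P1half_sq \<sigma> u) (L4pow4 u)"
  unfolding Wfun_def W_coords_def W1_eq_exp_log_W1[OF assms] W2_eq_exp_log_W2[OF assms]
    W3_eq_exp_log_W[OF assms] ..

definition young_coeff :: "real \<Rightarrow> real \<Rightarrow> real \<Rightarrow> real \<Rightarrow> real \<Rightarrow> real \<Rightarrow> real" where
  "young_coeff \<theta> X1 X2 X3 k1 k2 = X1 * k1 + X2 * k2 - X3 * ((1 - \<theta>) * k1 + \<theta> * k2)"

lemma W_coords_has_derivative:
  fixes At Qt Lt :: "real \<Rightarrow> real" and \<sigma> \<theta> :: real
  assumes A: "At 0 > 0" and Q: "Qt 0 > 0" and L: "Lt 0 > 0"
    and dA: "(At has_real_derivative a') (at 0)" and dQ: "(Qt has_real_derivative q') (at 0)"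
    and dL: "(Lt has_real_derivative l') (at 0)"
  defines "X1 \<equiv> exp (log_W1 \<sigma> (At 0) (Qt 0) (Lt 0))" and "X2 \<equiv> exp (log_W2 \<sigma> (At 0) (Qt 0) (Lt 0))"
    and "X3 \<equiv> exp ((1 - \<theta>) * log_W1 \<sigma> (At 0) (Qt 0) (Lt 0) + \<theta> * log_W2 \<sigma> (At 0) (Qt 0) (Lt 0))"
  shows "((\<lambda>t. W_coords \<sigma> \<theta> (At t) (Qt t) (Lt t)) has_real_derivative
     a' / At 0 * young_coeff \<theta> X1 X2 X3 ((4 * \<sigma> - 1) / (2 * \<sigma>)) (3 / 2)
     + q' / Qt 0 * young_coeff \<theta> X1 X2 X3 (1 / (2 * \<sigma>)) (1 / 2)
     - l' / Lt 0 * young_coeff \<theta> X1 X2 X3 1 1) (at 0)"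
proof -
  have lA: "((\<lambda>t. ln (At t)) has_real_derivative a' / At 0) (at 0)"
    and lQ: "((\<lambda>t. ln (Qt t)) has_real_derivative q' / Qt 0) (at 0)"
    and lL: "((\<lambda>t. ln (Lt t)) has_real_derivative l' / Lt 0) (at 0)"
    using DERIV_ln_divide[OF A] DERIV_ln_divide[OF Q] DERIV_ln_divide[OF L] dA dQ dL DERIV_chain2
    by (metis divide_inverse_commute inverse_eq_divide mult.commute)+
  define d1 where "d1 = (4 * \<sigma> - 1) / (2 * \<sigma>) * (a' / At 0) + 1 / (2 * \<sigma>) * (q' / Qt 0) - l' / Lt 0"
  define d2 where "d2 = 3 / 2 * (a' / At 0) + 1 / 2 * (q' / Qt 0) - l' / Lt 0"
  have dl1: "((\<lambda>t. log_W1 \<sigma> (At t) (Qt t) (Lt t)) has_real_derivative d1) (at 0)"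
    unfolding log_W1_def d1_def by (intro DERIV_diff DERIV_add DERIV_cmult lA lQ lL)
  have dl2: "((\<lambda>t. log_W2 \<sigma> (At t) (Qt t) (Lt t)) has_real_derivative d2) (at 0)"
  proof -
    have "((\<lambda>t. ln (alpha \<sigma>) + 3 / 2 * ln (At t) + 1 / 2 * ln (Qt t) - ln (Lt t)) has_real_derivative
        0 + 3 / 2 * (a' / At 0) + 1 / 2 * (q' / Qt 0) - l' / Lt 0) (at 0)"
      by (intro DERIV_diff DERIV_add DERIV_cmult lA lQ lL DERIV_const)
    thus ?thesis unfolding log_W2_def d2_def by simp
  qed
  have "((\<lambda>t. W_coords \<sigma> \<theta> (At t) (Qt t) (Lt t)) has_real_derivative
      X1 * d1 + X2 * d2 - X3 * ((1 - \<theta>) * d1 + \<theta> * d2)) (at 0)"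
    unfolding W_coords_def X1_def X2_def X3_def by (intro DERIV_diff DERIV_add DERIV_fun_exp dl1 dl2 DERIV_cmult)
  moreover have "X1 * d1 + X2 * d2 - X3 * ((1 - \<theta>) * d1 + \<theta> * d2)
      = a' / At 0 * young_coeff \<theta> X1 X2 X3 ((4 * \<sigma> - 1) / (2 * \<sigma>)) (3 / 2)
        + q' / Qt 0 * young_coeff \<theta> X1 X2 X3 (1 / (2 * \<sigma>)) (1 / 2)
        - l' / Lt 0 * young_coeff \<theta> X1 X2 X3 1 1"
  proof -
    have identity: "X1 * (k * x + c * y - z) + X2 * (3 / 2 * x + 1 / 2 * y - z)
        - X3 * ((1 - \<theta>) * (k * x + c * y - z) + \<theta> * (3 / 2 * x + 1 / 2 * y - z))
        = x * young_coeff \<theta> X1 X2 X3 k (3 / 2) + y * young_coeff \<theta> X1 X2 X3 c (1 / 2)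
          - z * young_coeff \<theta> X1 X2 X3 1 1" for k c x y z
      unfolding young_coeff_def by algebra
    show ?thesis unfolding d1_def d2_def by (rule identity)
  qed
  ultimately show ?thesis by simp
qed

text \<open>The positivity of the Lagrange multipliers rests on Young's inequality
  W3 \<le> (1 - \<theta>) W1 + \<theta> W2, valid for weights with k1 \<le> 2 k2 and k2 \<le> 2 k1.\<close>

lemma young_coeff_pos:
  assumes \<theta>: "0 < \<theta>" "\<theta> < 1" and X: "X1 > 0" "X2 > 0" "X3 \<le> (1 - \<theta>) * X1 + \<theta> * X2"
    and k: "0 < k1" "k1 \<le> 2 * k2" "k2 \<le> 2 * k1"
  shows "young_coeff \<theta> X1 X2 X3 k1 k2 > 0"
proof -
  define c where "c = (1 - \<theta>) * k1 + \<theta> * k2"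
  have "young_coeff \<theta> X1 X2 X3 k1 k2
      = X1 * (\<theta> * ((2 - \<theta>) * k1 - (1 - \<theta>) * k2)) + X2 * ((1 - \<theta>) * ((1 + \<theta>) * k2 - \<theta> * k1))
        + c * ((1 - \<theta>) * X1 + \<theta> * X2 - X3)"
    unfolding young_coeff_def c_def by algebra
  moreover have "(2 - \<theta>) * k1 - (1 - \<theta>) * k2 \<ge> \<theta> * k1"
    using mult_left_mono[OF k(3), of "1 - \<theta>"] \<theta> by (simp add: algebra_simps)
  moreover have "(1 + \<theta>) * k2 - \<theta> * k1 \<ge> (1 - \<theta>) * k2"
    using mult_left_mono[OF k(2), of \<theta>] \<theta> by (simp add: algebra_simps)
  moreover have "c \<ge> 0" unfolding c_def using \<theta> k by simp
  ultimately show ?thesis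
    using \<theta> X k by (smt (verit) mult_pos_pos mult_nonneg_nonneg)
qed

lemma W_young_coeffs_pos:
  assumes s: "1/2 < \<sigma>" "\<sigma> < 1" and \<theta>: "0 < \<theta>" "\<theta> < 1" and u: "Hs \<sigma> u" and A: "L2sq u > 0"
  shows "young_coeff \<theta> (W1 \<sigma> u) (W2 \<sigma> u) (W3 \<sigma> \<theta> u) ((4 * \<sigma> - 1) / (2 * \<sigma>)) (3 / 2) > 0"
    and "young_coeff \<theta> (W1 \<sigma> u) (W2 \<sigma> u) (W3 \<sigma> \<theta> u) (1 / (2 * \<sigma>)) (1 / 2) > 0"
    and "young_coeff \<theta> (W1 \<sigma> u) (W2 \<sigma> u) (W3 \<sigma> \<theta> u) 1 1 > 0"
proof -
  have X: "W1 \<sigma> u > 0" "W2 \<sigma> u > 0"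
    by (simp_all add: W1_eq_exp_log_W1[OF s u A] W2_eq_exp_log_W2[OF s u A])
  have "W3 \<sigma> \<theta> u \<le> (1 - \<theta>) * W1 \<sigma> u + \<theta> * W2 \<sigma> u"
    unfolding W3_def by (rule Youngs_inequality_0) (use \<theta> X in auto)
  note pos = young_coeff_pos[OF \<theta> X this]
  show "young_coeff \<theta> (W1 \<sigma> u) (W2 \<sigma> u) (W3 \<sigma> \<theta> u) ((4 * \<sigma> - 1) / (2 * \<sigma>)) (3 / 2) > 0"
    by (rule pos) (use s in \<open>auto simp: field_simps\<close>)
  show "young_coeff \<theta> (W1 \<sigma> u) (W2 \<sigma> u) (W3 \<sigma> \<theta> u) (1 / (2 * \<sigma>)) (1 / 2) > 0"
    by (rule pos) (use s in \<open>auto simp: field_simps\<close>)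
  show "young_coeff \<theta> (W1 \<sigma> u) (W2 \<sigma> u) (W3 \<sigma> \<theta> u) 1 1 > 0"
    by (rule pos) auto
qed

section \<open>Euler-Lagrange equation\<close>

lemma quadratic_pos_near_0:
  fixes A R B :: real assumes "A > 0" "B \<ge> 0"
  shows "\<exists>d>0. \<forall>t. \<bar>t\<bar> < d \<longrightarrow> A + 2 * t * R + t^2 * B > 0"
proof (intro exI conjI allI impI)
  show "A / (2 * \<bar>R\<bar> + 1) > 0" using assms by simp
  fix t assume "\<bar>t\<bar> < A / (2 * \<bar>R\<bar> + 1)"
  hence "\<bar>t\<bar> * (2 * \<bar>R\<bar> + 1) < A" by (simp add: field_simps)
  moreover have "\<bar>2 * t * R\<bar> \<le> \<bar>t\<bar> * (2 * \<bar>R\<bar> + 1)"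
    by (simp add: abs_mult algebra_simps)
  ultimately show "A + 2 * t * R + t^2 * B > 0"
    using assms by (smt (verit) zero_le_power2 mult_nonneg_nonneg)
qed

text \<open>Euler-Lagrange equation: the derivative of t \<mapsto> W(u + t \<phi>) at the minimiser vanishes.\<close>

lemma minimizer_Euler_Lagrange:
  assumes s: "1/2 < \<sigma>" "\<sigma> < 1" and u: "Hs \<sigma> u" and A: "L2sq u > 0"
    and min: "\<forall>v. Hs \<sigma> v \<and> L2norm v > 0 \<longrightarrow> Wfun \<sigma> \<theta> u \<le> Wfun \<sigma> \<theta> v"
    and \<phi>: "Hs \<sigma> \<phi>"
  shows "2 * Re (L2_inner u \<phi>) / L2sq u * young_coeff \<theta> (W1 \<sigma> u) (W2 \<sigma> u) (W3 \<sigma> \<theta> u) ((4 * \<sigma> - 1) / (2 * \<sigma>)) (3 / 2)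
    + 2 * Re (P1_form \<sigma> u \<phi>) / P1half_sq \<sigma> u * young_coeff \<theta> (W1 \<sigma> u) (W2 \<sigma> u) (W3 \<sigma> \<theta> u) (1 / (2 * \<sigma>)) (1 / 2)
    - 4 * Re (cubic_form u \<phi>) / L4pow4 u * young_coeff \<theta> (W1 \<sigma> u) (W2 \<sigma> u) (W3 \<sigma> \<theta> u) 1 1 = 0"
proof -
  obtain c2 c3 c4 where L_exp: "\<And>t. L4pow4 (\<lambda>x. u x + complex_of_real t * \<phi> x)
      = L4pow4 u + 4 * t * Re (cubic_form u \<phi>) + t^2 * c2 + t^3 * c3 + t^4 * c4"
    using Hs_L4pow4_add_scaled[OF s(1) u \<phi>] by blast
  define At where "At t = L2sq u + 2 * t * Re (L2_inner u \<phi>) + t^2 * L2sq \<phi>" for t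
  define Qt where "Qt t = P1half_sq \<sigma> u + 2 * t * Re (P1_form \<sigma> u \<phi>) + t^2 * P1half_sq \<sigma> \<phi>" for t
  define Lt where "Lt t = L4pow4 u + 4 * t * Re (cubic_form u \<phi>) + t^2 * c2 + t^3 * c3 + t^4 * c4" for t
  have A_line: "L2sq (\<lambda>x. u x + complex_of_real t * \<phi> x) = At t" for t
    unfolding At_def by (rule L2sq_add_scaled[OF Hs_sq_int[OF u] Hs_sq_int[OF \<phi>]])
  have W_line: "Wfun \<sigma> \<theta> (\<lambda>x. u x + complex_of_real t * \<phi> x) = W_coords \<sigma> \<theta> (At t) (Qt t) (Lt t)"
    if "At t > 0" for t
    using that Wfun_eq_W_coords[OF s Hs_add_scaled[OF s(1) u \<phi>]]
    by (simp add: A_line Qt_def Lt_def L_exp P1half_sq_add_scaled[OF s u \<phi>])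
  have At0: "At 0 = L2sq u" "Qt 0 = P1half_sq \<sigma> u" "Lt 0 = L4pow4 u"
    by (simp_all add: At_def Qt_def Lt_def)
  obtain d where d: "d > 0" "\<And>t. \<bar>t\<bar> < d \<Longrightarrow> At t > 0"
    using quadratic_pos_near_0[OF A, of "L2sq \<phi>" "Re (L2_inner u \<phi>)"] unfolding At_def L2sq_def by auto
  have min_near: "\<forall>t. \<bar>0 - t\<bar> < d \<longrightarrow>
      W_coords \<sigma> \<theta> (At 0) (Qt 0) (Lt 0) \<le> W_coords \<sigma> \<theta> (At t) (Qt t) (Lt t)"
  proof (intro allI impI)
    fix t assume "\<bar>0 - t\<bar> < d"
    hence At: "At t > 0" using d by simp
    hence "Wfun \<sigma> \<theta> u \<le> Wfun \<sigma> \<theta> (\<lambda>x. u x + complex_of_real t * \<phi> x)"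
      using min Hs_add_scaled[OF s(1) u \<phi>] by (simp add: L2norm_eq_sqrt_L2sq A_line)
    thus "W_coords \<sigma> \<theta> (At 0) (Qt 0) (Lt 0) \<le> W_coords \<sigma> \<theta> (At t) (Qt t) (Lt t)"
      using W_line[OF At] W_line[of 0] A by (simp add: At0)
  qed
  have pos: "At 0 > 0" "Qt 0 > 0" "Lt 0 > 0"
    using A P1half_sq_pos[OF s u A] L4pow4_pos[OF s(1) u A] by (simp_all add: At0)
  have "(At has_real_derivative 2 * Re (L2_inner u \<phi>)) (at 0)"
    "(Qt has_real_derivative 2 * Re (P1_form \<sigma> u \<phi>)) (at 0)"
    "(Lt has_real_derivative 4 * Re (cubic_form u \<phi>)) (at 0)"
    unfolding At_def Qt_def Lt_def by (auto intro!: derivative_eq_intros)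
  note D = W_coords_has_derivative[where \<sigma>=\<sigma> and \<theta>=\<theta>, OF pos this, unfolded At0,
    folded W1_eq_exp_log_W1[OF s u A] W2_eq_exp_log_W2[OF s u A] W3_eq_exp_log_W[OF s u A]]
  from DERIV_local_min[OF D d(1) min_near] show ?thesis .
qed

lemma L2_inner_scaled_right: "L2_inner u (\<lambda>x. c * \<phi> x) = cnj c * L2_inner u \<phi>"
  unfolding L2_inner_def by (simp add: mult_ac)

lemma cubic_form_scaled_right: "cubic_form u (\<lambda>x. c * \<phi> x) = cnj c * cubic_form u \<phi>"
  unfolding cubic_form_def by (simp add: mult_ac)

lemma P1_form_scaled_right:
  assumes u: "Hs \<sigma> u" and \<phi>: "Hs \<sigma> \<phi>"
  shows "P1_form \<sigma> u (\<lambda>x. c * \<phi> x) = cnj c * P1_form \<sigma> u \<phi>"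
proof -
  have "P1_form \<sigma> u (\<lambda>x. c * \<phi> x)
      = (LINT \<xi>|lborel. cnj c * (complex_of_real (p1 \<sigma> \<xi>) * FT u \<xi> * cnj (FT \<phi> \<xi>)))"
    unfolding P1_form_def
  proof (rule Bochner_Integration.integral_cong_AE)
    show "AE \<xi> in lborel. complex_of_real (p1 \<sigma> \<xi>) * FT u \<xi> * cnj (FT (\<lambda>x. c * \<phi> x) \<xi>)
        = cnj c * (complex_of_real (p1 \<sigma> \<xi>) * FT u \<xi> * cnj (FT \<phi> \<xi>))"
      using FT_scaled[OF \<phi>, of c] by eventually_elim simp
  qed (use u \<phi> Hs_scaled[OF \<phi>, of c] in \<open>unfold p1_def, measurable\<close>)
  thus ?thesis unfolding P1_form_def by simp
qed

lemma L2_inner_scaled_left: "L2_inner (\<lambda>x. c * u x) \<phi> = c * L2_inner u \<phi>"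
  unfolding L2_inner_def by (simp add: mult_ac)

lemma cubic_form_scaled_left:
  "cubic_form (\<lambda>x. complex_of_real c * u x) \<phi> = complex_of_real (c^3) * cubic_form u \<phi>"
proof -
  have "(cmod (complex_of_real c * u x))^2 = c^2 * (cmod (u x))^2" for x
    by (simp add: norm_mult power_mult_distrib)
  hence "complex_of_real ((cmod (complex_of_real c * u x))^2) * (complex_of_real c * u x) * cnj (\<phi> x)
      = complex_of_real (c^3) * (complex_of_real ((cmod (u x))^2) * u x * cnj (\<phi> x))" for x
    by (simp add: power3_eq_cube power2_eq_square mult_ac)
  hence "cubic_form (\<lambda>x. complex_of_real c * u x) \<phi>
      = (LINT x|lborel. complex_of_real (c^3) * (complex_of_real ((cmod (u x))^2) * u x * cnj (\<phi> x)))"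
    unfolding cubic_form_def by (intro Bochner_Integration.integral_cong refl)
  thus ?thesis unfolding cubic_form_def by (simp only: integral_mult_right_zero)
qed

lemma P1_form_scaled_left:
  assumes u: "Hs \<sigma> u" and \<phi>: "Hs \<sigma> \<phi>"
  shows "P1_form \<sigma> (\<lambda>x. c * u x) \<phi> = c * P1_form \<sigma> u \<phi>"
proof -
  have "P1_form \<sigma> (\<lambda>x. c * u x) \<phi>
      = (LINT \<xi>|lborel. c * (complex_of_real (p1 \<sigma> \<xi>) * FT u \<xi> * cnj (FT \<phi> \<xi>)))"
    unfolding P1_form_def
  proof (rule Bochner_Integration.integral_cong_AE)
    show "AE \<xi> in lborel. complex_of_real (p1 \<sigma> \<xi>) * FT (\<lambda>x. c * u x) \<xi> * cnj (FT \<phi> \<xi>)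
        = c * (complex_of_real (p1 \<sigma> \<xi>) * FT u \<xi> * cnj (FT \<phi> \<xi>))"
      using FT_scaled[OF u, of c] by eventually_elim (simp add: mult_ac)
  qed (use u \<phi> Hs_scaled[OF u, of c] in \<open>unfold p1_def, measurable\<close>)
  thus ?thesis unfolding P1_form_def by simp
qed

text \<open>All three forms are conjugate-linear in the test function, so testing with \<i> \<phi>
  turns the vanishing real part into a vanishing imaginary part.\<close>

lemma weak_sol_if_Re_vanishes:
  assumes u: "Hs \<sigma> u"
    and Re0: "\<And>\<phi>. Hs \<sigma> \<phi> \<Longrightarrow>
      Re (P1_form \<sigma> u \<phi>) + a * Re (L2_inner u \<phi>) - b * Re (cubic_form u \<phi>) = 0"
  shows "weak_sol \<sigma> a b u"
  unfolding weak_sol_iff_forms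
proof (intro conjI allI impI u)
  fix \<phi> assume \<phi>: "Hs \<sigma> \<phi>"
  define E where "E \<psi> = P1_form \<sigma> u \<psi> + complex_of_real a * L2_inner u \<psi> - complex_of_real b * cubic_form u \<psi>"
    for \<psi>
  have Re_E: "Re (E \<psi>) = 0" if "Hs \<sigma> \<psi>" for \<psi>
    using Re0[OF that] by (simp add: E_def)
  have "E (\<lambda>x. \<i> * \<phi> x) = - \<i> * E \<phi>"
    unfolding E_def P1_form_scaled_right[OF u \<phi>] L2_inner_scaled_right cubic_form_scaled_right
    by (simp add: algebra_simps)
  hence "Im (E \<phi>) = Re (E (\<lambda>x. \<i> * \<phi> x))" by simp
  hence "Re (E \<phi>) = 0" "Im (E \<phi>) = 0"
    using Re_E[OF \<phi>] Re_E[OF Hs_scaled[OF \<phi>, of \<i>]] by simp_all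
  thus "P1_form \<sigma> u \<phi> + complex_of_real a * L2_inner u \<phi> - complex_of_real b * cubic_form u \<phi> = 0"
    by (simp add: E_def complex_eq_iff)
qed

lemma weak_sol_scaled:
  assumes sol: "weak_sol \<sigma> a (b * c^2) u"
  shows "weak_sol \<sigma> a b (\<lambda>x. complex_of_real c * u x)"
  unfolding weak_sol_iff_forms
proof (intro conjI allI impI)
  have u: "Hs \<sigma> u" using sol by (simp add: weak_sol_iff_forms)
  show "Hs \<sigma> (\<lambda>x. complex_of_real c * u x)" by (rule Hs_scaled[OF u])
  fix \<phi> assume \<phi>: "Hs \<sigma> \<phi>"
  have "P1_form \<sigma> (\<lambda>x. complex_of_real c * u x) \<phi> + complex_of_real a * L2_inner (\<lambda>x. complex_of_real c * u x) \<phi>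
      - complex_of_real b * cubic_form (\<lambda>x. complex_of_real c * u x) \<phi>
      = complex_of_real c * (P1_form \<sigma> u \<phi> + complex_of_real a * L2_inner u \<phi>
        - complex_of_real (b * c^2) * cubic_form u \<phi>)"
    unfolding P1_form_scaled_left[OF u \<phi>] L2_inner_scaled_left cubic_form_scaled_left
    by (simp add: algebra_simps power3_eq_cube power2_eq_square)
  also have "\<dots> = 0" using sol \<phi> by (simp add: weak_sol_iff_forms)
  finally show "P1_form \<sigma> (\<lambda>x. complex_of_real c * u x) \<phi>
      + complex_of_real a * L2_inner (\<lambda>x. complex_of_real c * u x) \<phi>
      - complex_of_real b * cubic_form (\<lambda>x. complex_of_real c * u x) \<phi> = 0" .
qed

lemma minimizer_weak_sol:
  assumes s: "1/2 < \<sigma>" "\<sigma> < 1" and \<theta>: "0 < \<theta>" "\<theta> < 1" and u: "Hs \<sigma> u" and A: "L2sq u > 0"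
    and min: "\<forall>v. Hs \<sigma> v \<and> L2norm v > 0 \<longrightarrow> Wfun \<sigma> \<theta> u \<le> Wfun \<sigma> \<theta> v"
  shows "\<exists>a b. a > 0 \<and> b > 0 \<and> weak_sol \<sigma> a b u"
proof -
  let ?c = "young_coeff \<theta> (W1 \<sigma> u) (W2 \<sigma> u) (W3 \<sigma> \<theta> u)"
  define cA cQ cL where "cA = ?c ((4 * \<sigma> - 1) / (2 * \<sigma>)) (3 / 2)" and "cQ = ?c (1 / (2 * \<sigma>)) (1 / 2)"
    and "cL = ?c 1 1"
  have pos: "cA > 0" "cQ > 0" "cL > 0" "P1half_sq \<sigma> u > 0" "L4pow4 u > 0"
    unfolding cA_def cQ_def cL_def
    using W_young_coeffs_pos[OF s \<theta> u A] P1half_sq_pos[OF s u A] L4pow4_pos[OF s(1) u A] by auto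
  \<comment> \<open>Divide the Euler-Lagrange equation by the coefficient of the P1 term.\<close>
  define a where "a = cA * P1half_sq \<sigma> u / (cQ * L2sq u)"
  define b where "b = 2 * cL * P1half_sq \<sigma> u / (cQ * L4pow4 u)"
  have "weak_sol \<sigma> a b u"
  proof (rule weak_sol_if_Re_vanishes[OF u])
    fix \<phi> assume \<phi>: "Hs \<sigma> \<phi>"
    have identity: "y + cA * Q / (cQ * A) * x - 2 * cL * Q / (cQ * L) * z
        = Q / (2 * cQ) * (2 * x / A * cA + 2 * y / Q * cQ - 4 * z / L * cL)"
      if "A \<noteq> 0" "Q \<noteq> 0" "L \<noteq> 0" for x y z A Q L :: real
      using that pos by (simp add: field_simps)
    have "Re (P1_form \<sigma> u \<phi>) + a * Re (L2_inner u \<phi>) - b * Re (cubic_form u \<phi>)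
      = P1half_sq \<sigma> u / (2 * cQ) * (2 * Re (L2_inner u \<phi>) / L2sq u * cA
          + 2 * Re (P1_form \<sigma> u \<phi>) / P1half_sq \<sigma> u * cQ - 4 * Re (cubic_form u \<phi>) / L4pow4 u * cL)"
      unfolding a_def b_def by (rule identity) (use pos A in auto)
    also have "\<dots> = 0"
      using minimizer_Euler_Lagrange[OF s u A min \<phi>] unfolding cA_def cQ_def cL_def by simp
    finally show "Re (P1_form \<sigma> u \<phi>) + a * Re (L2_inner u \<phi>) - b * Re (cubic_form u \<phi>) = 0" .
  qed
  moreover have "a > 0" "b > 0" unfolding a_def b_def using pos A by simp_all
  ultimately show ?thesis by blast
qed

theorem lemma2p2:
  fixes \<sigma> :: real
  assumes "1/2 < \<sigma>" and "\<sigma> < 1"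
  shows "\<exists>\<theta>0. 0 < \<theta>0 \<and> \<theta>0 < 1 \<and>
    (\<forall>\<theta>. \<theta>0 < \<theta> \<and> \<theta> < 1 \<longrightarrow>
      (\<forall>u. Hs \<sigma> u \<and> L2norm u > 0 \<and>
           (\<forall>v. Hs \<sigma> v \<and> L2norm v > 0 \<longrightarrow> Wfun \<sigma> \<theta> u \<le> Wfun \<sigma> \<theta> v) \<longrightarrow>
        (\<exists>a b. a > 0 \<and> b > 0 \<and> weak_sol \<sigma> a b u \<and>
           (let \<omega> = a powr (1 / (2 * \<sigma>))
            in weak_sol \<sigma> (\<omega> powr (2 * \<sigma>)) 1 (\<lambda>x. complex_of_real (sqrt b) * u x)))))"
proof (rule exI[of _ "1/2"], intro conjI allI impI)
  \<comment> \<open>The argument works for every \<theta> in (0, 1), so any \<theta>0 will do.\<close>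
  fix \<theta> u
  assume \<theta>: "1/2 < \<theta> \<and> \<theta> < 1"
    and hyp: "Hs \<sigma> u \<and> L2norm u > 0 \<and> (\<forall>v. Hs \<sigma> v \<and> L2norm v > 0 \<longrightarrow> Wfun \<sigma> \<theta> u \<le> Wfun \<sigma> \<theta> v)"
  then obtain a b where ab: "a > 0" "b > 0" "weak_sol \<sigma> a b u"
    using minimizer_weak_sol[OF assms, of \<theta> u] by (auto simp: L2norm_eq_sqrt_L2sq)
  moreover have "(a powr (1 / (2 * \<sigma>))) powr (2 * \<sigma>) = a"
    using ab(1) assms by (simp add: powr_powr)
  moreover have "weak_sol \<sigma> a 1 (\<lambda>x. complex_of_real (sqrt b) * u x)"
    using weak_sol_scaled[of \<sigma> a 1 "sqrt b" u] ab by simp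
  ultimately show "\<exists>a b. a > 0 \<and> b > 0 \<and> weak_sol \<sigma> a b u \<and>
      (let \<omega> = a powr (1 / (2 * \<sigma>)) in weak_sol \<sigma> (\<omega> powr (2 * \<sigma>)) 1 (\<lambda>x. complex_of_real (sqrt b) * u x))"
    by (intro exI[of _ a] exI[of _ b]) simp
qed simp_all

end
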